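(* In the setting described in the context, assume the face quadrature is exact for $Q^{N+N_f}$ on each face and the mortar quadrature on each face is exact for $Q^{N+N_m}$, with $N_f,N_m\ge 0$, and let $K=\min(N,N_f,N_m)$. Let $g\in Q^K(\hat D)$ and let $\mathbf{g}=\big[g(\hat{\mathbf{x}});\,g(\hat{\mathbf{x}}_f);\,g(\hat{\mathbf{x}}_m)\big]$ be the concatenated vector of values of $g$ at the volume nodes, face nodes and mortar nodes. Then for each $i=1,\dots,d$, $$\hat{M}^{-1}\begin{bmatrix} I & E^T & E^TE_{mf}^T\end{bmatrix}\hat{Q}_{i,m}\,\mathbf{g}$$ equals the vector of values of $\partial g/\partial \hat x_i$ at the volume nodes.
   Context: Fix $d\in\{2,3\}$, $N\ge 1$, and a 1D quadrature rule on $[-1,1]$ with $N+1$ distinct nodes $x_1,\dots,x_{N+1}$ (either Gauss–Legendre or Gauss–Lobatto nodes) and positive weights $w_1,\dots,w_{N+1}$; let $\ell_1,\dots,\ell_{N+1}$ be the degree-$N$ Lagrange basis at these nodes. Set $\hat M_{1D}=\mathrm{diag}(w_1,\dots,w_{N+1})$ and $(\hat Q_{1D})_{jk}=w_j\ell_k'(x_j)$. On the reference element $\hat D=[-1,1]^d$ the volume nodes $\hat{\mathbf x}$ are the tensor grid of the 1D nodes, $\hat M=\hat M_{1D}\otimes\cdots\otimes\hat M_{1D}$ ($d$ factors, diagonal matrix of tensor weights), and $\hat Q_i=A_1\otimes\cdots\otimes A_d$ with $A_i=\hat Q_{1D}$ and $A_k=\hat M_{1D}$ for $k\ne i$. The face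 nodes $\hat{\mathbf x}_f$ are, for each of the $2d$ faces $\{\hat x_k=\pm1\}$, the points with $\hat x_k=\pm1$ and the other coordinates ranging over the 1D nodes; each face node carries the weight equal to the product of the 1D weights of its other coordinates, and $\hat M_f$ is the diagonal matrix of these face weights. $E$ maps the values at volume nodes of a polynomial in $Q^N(\hat D)$ to its values at the face nodes. The reference normal component $\hat n_i$ at any point of the face $\{\hat x_k=\pm1\}$ equals $\pm\delta_{ik}$; $\hat B_{i,f}=\mathrm{diag}(\hat{\mathbf n}_{i,f})\hat M_f$ where $\hat{\mathbf n}_{i,f}$ holds $\hat n_i$ at the face nodes. On each face choose mortar nodes $\hat{\mathbf x}_m$ (lying on that face) with real weights; $\hat M_m$ is the diagonal matrix of all mortar weights; $E_{mf}$ is block diagonal over faces, its block for a face mapping values at the face nodes of a polynomial in $Q^N$ of the $d-1$ face coordinates to its values at that face's mortar nodes; $E_{fm}=\hat M_f^{-1}E_{mf}^T\hat M_m$; $\hat B_{i,m}=\mathrm{diag}(\hat{\mathbf n}_{i,m})\hat M_m$ with $\hat{\mathbf n}_{i,m}$ the values of $\hat n_i$ at the mortar nodes. The mortar-based hybridized SBP operator is the $3\times 3$ block matrix (blocks indexed by volume, face, mortar nodes) $$\hat Q_{i,m}=\frac12\begin{bmatrix}\hat Q_i-\hat Q_i^T & E^T\hat B_{i,f} & 0\\ -\hat B_{i,f}E & 0 & \hat B_{i,f}E_{fm}\\ 0 & -\hat B_{i,m}E_{mf} & \hat B_{i,m}\end{bmatrix}.$$ $Q^{N_1,\dots,N_k}$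 denotes tensor-product polynomials in $k$ variables of degree at most $N_j$ in the $j$-th variable, $Q^M=Q^{M,\dots,M}$. "Face quadrature exact for $Q^{N+N_f}$" means that on each face the face-node quadrature integrates every polynomial in $Q^{N+N_f}$ of the face coordinates exactly; similarly for the mortar quadrature. *)

theory Defs
  imports "HOL-Analysis.Analysis" "HOL-Computational_Algebra.Polynomial"
begin

definition legendre :: "nat \<Rightarrow> real poly" where
  "legendre n = smult (1 / (2 ^ n * fact n)) ((pderiv ^^ n) ([:-1, 0, 1:] ^ n))"

definition lagrange :: "nat \<Rightarrow> (nat \<Rightarrow> real) \<Rightarrow> nat \<Rightarrow> real \<Rightarrow> real" where
  "lagrange N x k t = (\<Prod>m\<in>{0..N} - {k}. (t - x m) / (x k - x m))"

definition interp_rule :: "nat \<Rightarrow> (nat \<Rightarrow> real) \<Rightarrow> (nat \<Rightarrow> real) \<Rightarrow> bool" where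
  "interp_rule N x w \<longleftrightarrow> inj_on x {0..N} \<and>
     (\<forall>j\<le>N. w j = integral {-1..1} (lagrange N x j))"

definition gauss_legendre :: "nat \<Rightarrow> (nat \<Rightarrow> real) \<Rightarrow> (nat \<Rightarrow> real) \<Rightarrow> bool" where
  "gauss_legendre N x w \<longleftrightarrow> interp_rule N x w \<and>
     x ` {0..N} = {t. poly (legendre (Suc N)) t = 0}"

definition gauss_lobatto :: "nat \<Rightarrow> (nat \<Rightarrow> real) \<Rightarrow> (nat \<Rightarrow> real) \<Rightarrow> bool" where
  "gauss_lobatto N x w \<longleftrightarrow> interp_rule N x w \<and>
     x ` {0..N} = {-1, 1} \<union> {t. poly (pderiv (legendre N)) t = 0}"

definition M1D :: "(nat \<Rightarrow> real) \<Rightarrow> nat \<Rightarrow> nat \<Rightarrow> real" where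
  "M1D w j k = (if j = k then w j else 0)"

definition Q1D :: "nat \<Rightarrow> (nat \<Rightarrow> real) \<Rightarrow> (nat \<Rightarrow> real) \<Rightarrow> nat \<Rightarrow> nat \<Rightarrow> real" where
  "Q1D N x w j k = w j * deriv (lagrange N x k) (x j)"

text \<open>Points of R^d are functions nat => real; only coordinates 0..d-1 matter.
  Coordinate directions are 0-based: i < d.\<close>

definition vidx :: "nat \<Rightarrow> nat \<Rightarrow> nat list set" where
  "vidx d N = {\<alpha>. length \<alpha> = d \<and> set \<alpha> \<subseteq> {0..N}}"

definition tensor_poly :: "nat \<Rightarrow> nat \<Rightarrow> ((nat \<Rightarrow> real) \<Rightarrow> real) \<Rightarrow> bool" where
  "tensor_poly d K g \<longleftrightarrow> (\<exists>c :: nat list \<Rightarrow> real. \<forall>p.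
      g p = (\<Sum>\<alpha>\<in>vidx d K. c \<alpha> * (\<Prod>j<d. p j ^ (\<alpha> ! j))))"

definition partial_deriv :: "((nat \<Rightarrow> real) \<Rightarrow> real) \<Rightarrow> nat \<Rightarrow> (nat \<Rightarrow> real) \<Rightarrow> real" where
  "partial_deriv g i p = deriv (\<lambda>t. g (p(i := t))) (p i)"

definition lag_tensor :: "nat \<Rightarrow> (nat \<Rightarrow> real) \<Rightarrow> nat set \<Rightarrow> nat list \<Rightarrow> (nat \<Rightarrow> real) \<Rightarrow> real" where
  "lag_tensor N x L \<beta> p = (\<Prod>l\<in>L. lagrange N x (\<beta> ! l) (p l))"

definition vnode :: "nat \<Rightarrow> (nat \<Rightarrow> real) \<Rightarrow> nat list \<Rightarrow> nat \<Rightarrow> real" where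
  "vnode d x \<alpha> = (\<lambda>j. if j < d then x (\<alpha> ! j) else 0)"

definition Mvol :: "nat \<Rightarrow> (nat \<Rightarrow> real) \<Rightarrow> nat list \<Rightarrow> real" where
  "Mvol d w \<alpha> = (\<Prod>l<d. w (\<alpha> ! l))"

definition Qvol :: "nat \<Rightarrow> nat \<Rightarrow> (nat \<Rightarrow> real) \<Rightarrow> (nat \<Rightarrow> real) \<Rightarrow> nat \<Rightarrow> nat list \<Rightarrow> nat list \<Rightarrow> real" where
  "Qvol d N x w i \<alpha> \<beta> =
     (\<Prod>l<d. if l = i then Q1D N x w (\<alpha> ! l) (\<beta> ! l) else M1D w (\<alpha> ! l) (\<beta> ! l))"

text \<open>Face node (k, s, alpha): face x_k = +1 if s, -1 otherwise; the other
  coordinates are x (alpha ! l); the entry alpha ! k is fixed to 0.\<close>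

type_synonym fidx = "nat \<times> bool \<times> nat list"
type_synonym midx = "nat \<times> bool \<times> nat"

definition sgn_face :: "bool \<Rightarrow> real" where
  "sgn_face s = (if s then 1 else -1)"

definition face_set :: "nat \<Rightarrow> nat \<Rightarrow> nat \<Rightarrow> bool \<Rightarrow> nat list set" where
  "face_set d N k s = {\<alpha> \<in> vidx d N. \<alpha> ! k = 0}"

definition fidx_set :: "nat \<Rightarrow> nat \<Rightarrow> fidx set" where
  "fidx_set d N = {(k, s, \<alpha>). k < d \<and> \<alpha> \<in> face_set d N k s}"

definition fnode :: "nat \<Rightarrow> (nat \<Rightarrow> real) \<Rightarrow> fidx \<Rightarrow> nat \<Rightarrow> real" where
  "fnode d x f = (case f of (k, s, \<alpha>) \<Rightarrow>
      (\<lambda>j. if j = k then sgn_face s else if j < d then x (\<alpha> ! j) else 0))"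

definition fweight :: "nat \<Rightarrow> (nat \<Rightarrow> real) \<Rightarrow> fidx \<Rightarrow> real" where
  "fweight d w f = (case f of (k, s, \<alpha>) \<Rightarrow> (\<Prod>l\<in>{..<d} - {k}. w (\<alpha> ! l)))"

definition nrm :: "nat \<Rightarrow> nat \<Rightarrow> bool \<Rightarrow> real" where
  "nrm i k s = (if i = k then sgn_face s else 0)"

definition Emat :: "nat \<Rightarrow> nat \<Rightarrow> (nat \<Rightarrow> real) \<Rightarrow> fidx \<Rightarrow> nat list \<Rightarrow> real" where
  "Emat d N x f \<beta> = lag_tensor N x {..<d} \<beta> (fnode d x f)"

text \<open>On face (k, s) there are m k s mortar nodes y k s j (j < m k s)
  with real weights om k s j.\<close>

definition midx_set :: "nat \<Rightarrow> (nat \<Rightarrow> bool \<Rightarrow> nat) \<Rightarrow> midx set" where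
  "midx_set d m = {(k, s, j). k < d \<and> j < m k s}"

definition mortar_on_faces ::
  "nat \<Rightarrow> (nat \<Rightarrow> bool \<Rightarrow> nat) \<Rightarrow> (nat \<Rightarrow> bool \<Rightarrow> nat \<Rightarrow> nat \<Rightarrow> real) \<Rightarrow> bool" where
  "mortar_on_faces d m y \<longleftrightarrow> (\<forall>k<d. \<forall>s. \<forall>j<m k s.
      y k s j k = sgn_face s \<and> (\<forall>l<d. l \<noteq> k \<longrightarrow> -1 \<le> y k s j l \<and> y k s j l \<le> 1))"

definition mpoint :: "(nat \<Rightarrow> bool \<Rightarrow> nat \<Rightarrow> nat \<Rightarrow> real) \<Rightarrow> midx \<Rightarrow> nat \<Rightarrow> real" where
  "mpoint y \<mu> = (case \<mu> of (k, s, j) \<Rightarrow> y k s j)"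

definition mweight :: "(nat \<Rightarrow> bool \<Rightarrow> nat \<Rightarrow> real) \<Rightarrow> midx \<Rightarrow> real" where
  "mweight om \<mu> = (case \<mu> of (k, s, j) \<Rightarrow> om k s j)"

definition mface :: "midx \<Rightarrow> nat \<times> bool" where
  "mface \<mu> = (case \<mu> of (k, s, j) \<Rightarrow> (k, s))"

definition fface :: "fidx \<Rightarrow> nat \<times> bool" where
  "fface f = (case f of (k, s, \<alpha>) \<Rightarrow> (k, s))"

definition Emf :: "nat \<Rightarrow> nat \<Rightarrow> (nat \<Rightarrow> real) \<Rightarrow> (nat \<Rightarrow> bool \<Rightarrow> nat \<Rightarrow> nat \<Rightarrow> real)
     \<Rightarrow> midx \<Rightarrow> fidx \<Rightarrow> real" where
  "Emf d N x y \<mu> f = (case f of (k, s, \<alpha>) \<Rightarrow>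
      if mface \<mu> = (k, s) then lag_tensor N x ({..<d} - {k}) \<alpha> (mpoint y \<mu>) else 0)"

text \<open>E_fm = M_f^{-1} E_mf^T M_m.\<close>
definition Efm :: "nat \<Rightarrow> nat \<Rightarrow> (nat \<Rightarrow> real) \<Rightarrow> (nat \<Rightarrow> real)
     \<Rightarrow> (nat \<Rightarrow> bool \<Rightarrow> nat \<Rightarrow> nat \<Rightarrow> real) \<Rightarrow> (nat \<Rightarrow> bool \<Rightarrow> nat \<Rightarrow> real)
     \<Rightarrow> fidx \<Rightarrow> midx \<Rightarrow> real" where
  "Efm d N x w y om f \<mu> = (1 / fweight d w f) * Emf d N x y \<mu> f * mweight om \<mu>"

text \<open>A rule with nodes pt s and weights wt s (s in S) on the face normal to
  direction k is exact for Q^M of the face coordinates: exact on every tensor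
  monomial (hence, by linearity, on all of Q^M).\<close>
definition face_quad_exact :: "nat \<Rightarrow> nat \<Rightarrow> nat \<Rightarrow> 'a set \<Rightarrow> ('a \<Rightarrow> real)
     \<Rightarrow> ('a \<Rightarrow> nat \<Rightarrow> real) \<Rightarrow> bool" where
  "face_quad_exact d k M S wt pt \<longleftrightarrow> (\<forall>\<gamma>\<in>vidx d M.
     (\<Sum>s\<in>S. wt s * (\<Prod>l\<in>{..<d} - {k}. pt s l ^ (\<gamma> ! l)))
       = (\<Prod>l\<in>{..<d} - {k}. integral {-1..1} (\<lambda>t::real. t ^ (\<gamma> ! l))))"

datatype hidx = HV "nat list" | HF fidx | HM midx

definition hidx_set :: "nat \<Rightarrow> nat \<Rightarrow> (nat \<Rightarrow> bool \<Rightarrow> nat) \<Rightarrow> hidx set" where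
  "hidx_set d N m = HV ` vidx d N \<union> HF ` fidx_set d N \<union> HM ` midx_set d m"

definition Qim :: "nat \<Rightarrow> nat \<Rightarrow> (nat \<Rightarrow> real) \<Rightarrow> (nat \<Rightarrow> real)
     \<Rightarrow> (nat \<Rightarrow> bool \<Rightarrow> nat \<Rightarrow> nat \<Rightarrow> real) \<Rightarrow> (nat \<Rightarrow> bool \<Rightarrow> nat \<Rightarrow> real)
     \<Rightarrow> nat \<Rightarrow> hidx \<Rightarrow> hidx \<Rightarrow> real" where
  "Qim d N x w y om i a b = (1/2) * (case (a, b) of
      (HV \<alpha>, HV \<beta>) \<Rightarrow> Qvol d N x w i \<alpha> \<beta> - Qvol d N x w i \<beta> \<alpha>
    | (HV \<alpha>, HF f) \<Rightarrow> Emat d N x f \<alpha> * (nrm i (fst f) (fst (snd f)) * fweight d w f)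
    | (HV \<alpha>, HM \<mu>) \<Rightarrow> 0
    | (HF f, HV \<beta>) \<Rightarrow> - (nrm i (fst f) (fst (snd f)) * fweight d w f) * Emat d N x f \<beta>
    | (HF f, HF f') \<Rightarrow> 0
    | (HF f, HM \<mu>) \<Rightarrow> (nrm i (fst f) (fst (snd f)) * fweight d w f) * Efm d N x w y om f \<mu>
    | (HM \<mu>, HV \<beta>) \<Rightarrow> 0
    | (HM \<mu>, HF f) \<Rightarrow> - (nrm i (fst \<mu>) (fst (snd \<mu>)) * mweight om \<mu>) * Emf d N x y \<mu> f
    | (HM \<mu>, HM \<mu>') \<Rightarrow> (if \<mu> = \<mu>' then nrm i (fst \<mu>) (fst (snd \<mu>)) * mweight om \<mu> else 0))"

definition Prow :: "nat \<Rightarrow> nat \<Rightarrow> (nat \<Rightarrow> real) \<Rightarrow> (nat \<Rightarrow> bool \<Rightarrow> nat)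
     \<Rightarrow> (nat \<Rightarrow> bool \<Rightarrow> nat \<Rightarrow> nat \<Rightarrow> real) \<Rightarrow> nat list \<Rightarrow> hidx \<Rightarrow> real" where
  "Prow d N x m y \<alpha> h = (case h of
      HV \<beta> \<Rightarrow> (if \<alpha> = \<beta> then 1 else 0)
    | HF f \<Rightarrow> Emat d N x f \<alpha>
    | HM \<mu> \<Rightarrow> (\<Sum>f\<in>fidx_set d N. Emat d N x f \<alpha> * Emf d N x y \<mu> f))"

definition gvec :: "nat \<Rightarrow> (nat \<Rightarrow> real) \<Rightarrow> (nat \<Rightarrow> bool \<Rightarrow> nat \<Rightarrow> nat \<Rightarrow> real)
     \<Rightarrow> ((nat \<Rightarrow> real) \<Rightarrow> real) \<Rightarrow> hidx \<Rightarrow> real" where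
  "gvec d x y g h = (case h of
      HV \<alpha> \<Rightarrow> g (vnode d x \<alpha>)
    | HF f \<Rightarrow> g (fnode d x f)
    | HM \<mu> \<Rightarrow> g (mpoint y \<mu>))"

end

(* Expand g into tensor monomials of degree at most K <= N in each variable. Then E reproduces g at
   the face nodes and E_mf at the mortar nodes, and because the face and mortar rules both integrate
   degree N + K exactly, E_fm maps the mortar values of g back to its face values. So the face and
   mortar rows of Q_{i,m} g vanish, and [I, E^T, E^T E_mf^T] just extracts the volume row
   (Q_i g - Q_i^T g + E^T B_i g_f) / 2. Gauss rules are exact to degree 2N - 1, which gives both
   Q_i g = M dg/dx_i and summation by parts Q_i + Q_i^T = E^T B_i E on Q^N; the row is M dg/dx_i. *)

theory Submission
  imports Defs
begin

section \<open>Lagrange interpolation\<close>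

definition lagrange_poly :: "nat \<Rightarrow> (nat \<Rightarrow> real) \<Rightarrow> nat \<Rightarrow> real poly" where
  "lagrange_poly N x k = (\<Prod>m\<in>{0..N} - {k}. [: - x m / (x k - x m), 1 / (x k - x m) :])"

lemma lagrange_eq_poly: "lagrange N x k = poly (lagrange_poly N x k)"
  unfolding lagrange_def lagrange_poly_def poly_prod
  by (intro ext prod.cong) (auto simp: diff_divide_distrib)

lemma poly_lagrange_poly: "poly (lagrange_poly N x k) t = lagrange N x k t"
  by (simp add: lagrange_eq_poly)

lemma degree_prod_linear_le:
  "finite B \<Longrightarrow> degree (\<Prod>b\<in>B. [:c b, e b:]) \<le> card B"
proof (induction B rule: finite_induct)
  case (insert a B)
  have "degree [:c a, e a:] \<le> 1" using degree_pCons_le[of "c a" "[:e a:]"] by simp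
  then show ?case
    using insert order_trans[OF degree_mult_le, of "[:c a, e a:]" "\<Prod>b\<in>B. [:c b, e b:]"] by simp
qed simp

lemma degree_lagrange_poly:
  assumes "k \<le> N"
  shows "degree (lagrange_poly N x k) \<le> N"
  using degree_prod_linear_le[of "{0..N} - {k}"] assms unfolding lagrange_poly_def by simp

lemma lagrange_node:
  assumes "inj_on x {0..N}" "j \<le> N" "k \<le> N"
  shows "lagrange N x k (x j) = (if j = k then 1 else 0)"
proof (cases "j = k")
  case True
  have "x k \<noteq> x m" if "m \<in> {0..N} - {k}" for m
    using assms that inj_on_eq_iff[OF assms(1)] by auto
  then have "lagrange N x k (x k) = 1" unfolding lagrange_def by (intro prod.neutral) auto
  then show ?thesis using True by simp
next
  case False
  then have "lagrange N x k (x j) = 0" unfolding lagrange_def by (intro prod_zero) (use assms in auto)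
  then show ?thesis using False by simp
qed

lemma sum_lagrange_node:
  assumes "inj_on x {0..N}" "a \<le> N"
  shows "(\<Sum>b\<le>N. lagrange N x a (x b) * f b) = f a"
proof -
  have "(\<Sum>b\<le>N. lagrange N x a (x b) * f b) = (\<Sum>b\<le>N. if b = a then f b else 0)"
    using assms by (intro sum.cong) (auto simp: lagrange_node)
  then show ?thesis using assms(2) by simp
qed

lemma lagrange_interpolation:
  assumes inj: "inj_on x {0..N}" and deg: "degree p \<le> N"
  shows "p = (\<Sum>b\<le>N. smult (poly p (x b)) (lagrange_poly N x b))"
    (is "p = ?I")
proof (rule poly_eqI_degree[of "x ` {0..N}"])
  show "poly p t = poly ?I t" if "t \<in> x ` {0..N}" for t
  proof -
    obtain j where j: "j \<le> N" "t = x j" using \<open>t \<in> x ` {0..N}\<close> by auto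
    have "poly ?I t = (\<Sum>b\<le>N. poly p (x b) * (if j = b then 1 else 0))"
      using j inj by (simp add: poly_sum lagrange_eq_poly[symmetric] lagrange_node)
    then show ?thesis using j by (simp add: if_distrib cong: if_cong)
  qed
  have "degree ?I \<le> N"
    by (intro degree_sum_le) (auto intro: order_trans[OF degree_smult_le] degree_lagrange_poly)
  moreover have "card (x ` {0..N}) = Suc N" using card_image[OF inj] by simp
  ultimately show "degree p < card (x ` {0..N})" "degree ?I < card (x ` {0..N})"
    using deg by linarith+
qed

lemma lagrange_interpolation_monom:
  assumes "inj_on x {0..N}" "e \<le> N"
  shows "monom 1 e = (\<Sum>b\<le>N. smult (x b ^ e) (lagrange_poly N x b))"
  using lagrange_interpolation[OF assms(1), of "monom 1 e"] assms(2)
  by (simp add: degree_monom_eq poly_monom)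

lemma sum_lagrange_power:
  assumes "inj_on x {0..N}" "e \<le> N"
  shows "(\<Sum>b\<le>N. lagrange N x b t * x b ^ e) = t ^ e"
  using arg_cong[OF lagrange_interpolation_monom[OF assms], of "\<lambda>p. poly p t"]
  by (simp add: poly_sum poly_monom lagrange_eq_poly mult.commute)

lemma deriv_lagrange: "deriv (lagrange N x b) t = poly (pderiv (lagrange_poly N x b)) t"
  unfolding lagrange_eq_poly by (rule DERIV_imp_deriv) (rule poly_DERIV)

lemma sum_deriv_lagrange_power:
  assumes "inj_on x {0..N}" "e \<le> N"
  shows "(\<Sum>b\<le>N. deriv (lagrange N x b) t * x b ^ e) = of_nat e * t ^ (e - 1)"
proof -
  have "pderiv (\<Sum>b\<le>N. smult (x b ^ e) (lagrange_poly N x b))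
      = (\<Sum>b\<le>N. smult (x b ^ e) (pderiv (lagrange_poly N x b)))"
    using higher_pderiv_sum[of 1 "\<lambda>b. smult (x b ^ e) (lagrange_poly N x b)" "{..N}"]
    by (simp add: pderiv_smult)
  then show ?thesis
    using arg_cong[OF lagrange_interpolation_monom[OF assms], of "\<lambda>p. poly (pderiv p) t"]
    by (simp add: poly_sum poly_monom pderiv_monom deriv_lagrange mult.commute)
qed

definition poly_integral :: "real poly \<Rightarrow> real" where
  "poly_integral p = integral {-1..1} (poly p)"

lemma poly_integrable: "poly p integrable_on {a..b::real}"
  by (intro integrable_continuous_interval continuous_intros)

lemma poly_integral_add: "poly_integral (p + q) = poly_integral p + poly_integral q"
  unfolding poly_integral_def poly_add by (intro integral_add poly_integrable)

lemma poly_integral_smult: "poly_integral (smult c p) = c * poly_integral p"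
  unfolding poly_integral_def poly_smult by simp

lemma poly_integral_0 [simp]: "poly_integral 0 = 0"
  using poly_integral_smult[of 0 0] by simp

lemma poly_integral_sum: "poly_integral (\<Sum>a\<in>A. f a) = (\<Sum>a\<in>A. poly_integral (f a))"
  by (induction A rule: infinite_finite_induct) (auto simp: poly_integral_add)

lemma poly_integral_monom: "poly_integral (monom 1 e) = integral {-1..1} (\<lambda>t::real. t ^ e)"
  unfolding poly_integral_def by (rule arg_cong[where f = "integral _"]) (simp add: fun_eq_iff poly_monom)

lemma poly_integral_pderiv: "poly_integral (pderiv p) = poly p 1 - poly p (-1)"
  unfolding poly_integral_def
proof (intro integral_unique fundamental_theorem_of_calculus)
  fix t :: real
  show "(poly p has_vector_derivative poly (pderiv p) t) (at t within {-1..1})"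
    by (simp add: has_field_derivative_at_within has_real_derivative_iff_has_vector_derivative[symmetric])
qed simp

lemma poly_integral_by_parts:
  "poly_integral (pderiv a * b) = poly (a * b) 1 - poly (a * b) (-1) - poly_integral (a * pderiv b)"
  using poly_integral_pderiv[of "a * b"]
  by (simp add: pderiv_mult poly_integral_add algebra_simps)

lemma poly_integral_eq_sum_coeff:
  assumes "degree p \<le> M"
  shows "poly_integral p = (\<Sum>e\<le>M. coeff p e * integral {-1..1} (\<lambda>t::real. t ^ e))"
proof -
  have "p = (\<Sum>e\<le>M. smult (coeff p e) (monom 1 e))"
    using assms by (simp add: poly_as_sum_of_monoms' smult_monom)
  then show ?thesis
    by (metis (no_types, lifting) poly_integral_sum poly_integral_smult poly_integral_monom sum.cong)
qed

section \<open>Orthogonality of the Legendre polynomials\<close>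

definition rodrigues_base :: "real poly" where
  "rodrigues_base = [:-1, 0, 1:]"

lemma rodrigues_base_simps [simp]:
  "poly rodrigues_base 1 = 0" "poly rodrigues_base (-1) = 0"
  "degree rodrigues_base = 2" "rodrigues_base \<noteq> 0"
  unfolding rodrigues_base_def by simp_all

lemma higher_pderiv_rodrigues_base_power:
  "j \<le> n \<Longrightarrow> \<exists>r. (pderiv ^^ j) (rodrigues_base ^ n) = rodrigues_base ^ (n - j) * r"
proof (induction j)
  case 0
  then show ?case by (intro exI[of _ 1]) simp
next
  case (Suc j)
  then obtain r where r: "(pderiv ^^ j) (rodrigues_base ^ n) = rodrigues_base ^ Suc (n - Suc j) * r"
    by (auto simp: Suc_diff_Suc)
  define m where "m = n - Suc j"
  have "(pderiv ^^ Suc j) (rodrigues_base ^ n) = pderiv (rodrigues_base ^ Suc m * r)"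
    using r m_def by simp
  also have "\<dots> = rodrigues_base ^ m
      * (rodrigues_base * pderiv r + r * smult (of_nat (Suc m)) (pderiv rodrigues_base))"
    by (simp only: pderiv_mult pderiv_power_Suc) (simp add: algebra_simps del: rodrigues_base_simps)
  finally show ?case unfolding m_def by blast
qed

lemma higher_pderiv_rodrigues_base_power_boundary:
  assumes "j < n"
  shows "poly ((pderiv ^^ j) (rodrigues_base ^ n)) 1 = 0"
    and "poly ((pderiv ^^ j) (rodrigues_base ^ n)) (-1) = 0"
proof -
  obtain r where "(pderiv ^^ j) (rodrigues_base ^ n) = rodrigues_base ^ (n - j) * r"
    using higher_pderiv_rodrigues_base_power[of j n] assms by auto
  moreover have "n - j \<noteq> 0" using assms by simp
  ultimately show "poly ((pderiv ^^ j) (rodrigues_base ^ n)) 1 = 0"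
    and "poly ((pderiv ^^ j) (rodrigues_base ^ n)) (-1) = 0"
    by (simp_all add: poly_power zero_power)
qed

lemma poly_integral_by_parts_iter:
  assumes "\<And>j. j < k \<Longrightarrow> poly ((pderiv ^^ j) v) 1 = 0 \<and> poly ((pderiv ^^ j) v) (-1) = 0"
  shows "poly_integral ((pderiv ^^ k) v * q) = (-1) ^ k * poly_integral (v * (pderiv ^^ k) q)"
  using assms
proof (induction k arbitrary: v q)
  case 0
  then show ?case by simp
next
  case (Suc k)
  have shift: "(pderiv ^^ Suc j) v = (pderiv ^^ j) (pderiv v)" for j
    by (simp only: funpow_Suc_right o_def)
  have "poly_integral ((pderiv ^^ Suc k) v * q) = (-1) ^ k * poly_integral (pderiv v * (pderiv ^^ k) q)"
    unfolding shift
  proof (rule Suc.IH)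
    fix j assume "j < k"
    then show "poly ((pderiv ^^ j) (pderiv v)) 1 = 0 \<and> poly ((pderiv ^^ j) (pderiv v)) (-1) = 0"
      using Suc.prems[of "Suc j"] unfolding shift by simp
  qed
  also have "poly_integral (pderiv v * (pderiv ^^ k) q) = - poly_integral (v * (pderiv ^^ Suc k) q)"
    using poly_integral_by_parts[of v "(pderiv ^^ k) q"] Suc.prems[of 0] by simp
  finally show ?case by simp
qed

lemma higher_pderiv_eq_0: "degree q < j \<Longrightarrow> (pderiv ^^ j) (q :: real poly) = 0"
proof (induction j arbitrary: q)
  case (Suc j)
  then show ?case
    by (cases j) (auto simp: pderiv_eq_0_iff degree_pderiv funpow_Suc_right simp del: funpow.simps)
qed simp

lemma legendre_orthogonal:
  assumes "degree q < n"
  shows "poly_integral (legendre n * q) = 0"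
proof -
  have "poly_integral ((pderiv ^^ n) (rodrigues_base ^ n) * q)
      = (-1) ^ n * poly_integral (rodrigues_base ^ n * (pderiv ^^ n) q)"
    by (intro poly_integral_by_parts_iter) (simp add: higher_pderiv_rodrigues_base_power_boundary)
  then show ?thesis
    unfolding legendre_def rodrigues_base_def[symmetric] using higher_pderiv_eq_0[OF assms]
    by (simp add: poly_integral_smult)
qed

lemma degree_legendre: "degree (legendre n) \<le> n"
proof -
  have "degree (rodrigues_base ^ n) \<le> 2 * n" using degree_power_le[of rodrigues_base n] by simp
  then show ?thesis
    unfolding legendre_def rodrigues_base_def[symmetric]
    by (simp add: degree_higher_pderiv order_trans[OF degree_smult_le])
qed

section \<open>Gauss quadrature\<close>

definition quad :: "nat \<Rightarrow> (nat \<Rightarrow> real) \<Rightarrow> (nat \<Rightarrow> real) \<Rightarrow> real poly \<Rightarrow> real" where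
  "quad N x w p = (\<Sum>j\<le>N. w j * poly p (x j))"

lemma interp_rule_inj: "interp_rule N x w \<Longrightarrow> inj_on x {0..N}"
  unfolding interp_rule_def by simp

lemma interp_rule_exact:
  assumes ir: "interp_rule N x w" and deg: "degree p \<le> N"
  shows "poly_integral p = quad N x w p"
proof -
  have "poly_integral p = poly_integral (\<Sum>b\<le>N. smult (poly p (x b)) (lagrange_poly N x b))"
    using arg_cong[OF lagrange_interpolation[OF interp_rule_inj[OF ir] deg], of poly_integral] .
  also have "\<dots> = (\<Sum>b\<le>N. poly p (x b) * poly_integral (lagrange_poly N x b))"
    by (simp add: poly_integral_sum poly_integral_smult)
  also have "\<dots> = quad N x w p"
    using ir unfolding quad_def interp_rule_def poly_integral_def lagrange_eq_poly
    by (intro sum.cong) auto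
  finally show ?thesis .
qed

text \<open>A rule with \<open>N + 1\<close> nodes is exact up to degree \<open>N + B\<close> as soon as some polynomial of
  degree \<open>N + 1\<close> vanishing at the nodes is orthogonal to all polynomials of degree \<open>< B\<close>:
  divide by it and apply interpolatory exactness to the remainder.\<close>

lemma quad_exact_of_orthogonal_node_poly:
  assumes ir: "interp_rule N x w" and P0: "P \<noteq> 0" and dP: "degree P \<le> Suc N"
    and van: "\<And>j. j \<le> N \<Longrightarrow> poly P (x j) = 0"
    and orth: "\<And>q. degree q < B \<Longrightarrow> poly_integral (P * q) = 0"
    and dp: "degree p < Suc N + B"
  shows "poly_integral p = quad N x w p"
proof -
  have inj: "inj_on x {0..N}" using ir by (rule interp_rule_inj)
  have "Suc N = card (x ` {0..N})" using card_image[OF inj] by simp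
  also have "\<dots> \<le> card {t. poly P t = 0}"
    using van by (intro card_mono poly_roots_finite[OF P0]) auto
  also have "\<dots> \<le> degree P" by (rule card_poly_roots_bound[OF P0])
  finally have dP_eq: "degree P = Suc N" using dP by simp
  define q r where "q = p div P" and "r = p mod P"
  have p_eq: "p = P * q + r" unfolding q_def r_def by (simp add: mult.commute)
  have dr: "degree r \<le> N" using degree_mod_less[OF P0, of p] dP_eq unfolding r_def by auto
  have "poly_integral (P * q) = 0"
  proof (cases "q = 0")
    case False
    have "Suc N + degree q = degree (p - r)"
      using p_eq degree_mult_eq[OF P0 False] dP_eq by simp
    also have "\<dots> \<le> max (degree p) (degree r)" by (rule degree_diff_le_max)
    finally have "degree q < B" using dp dr by auto
    then show ?thesis by (rule orth)
  qed simp
  moreover have "quad N x w r = quad N x w p"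
    unfolding quad_def using van p_eq by (intro sum.cong) auto
  ultimately show ?thesis
    using p_eq interp_rule_exact[OF ir dr] by (simp add: poly_integral_add)
qed

lemma nonzero_if_roots_among_nodes:
  assumes "{t. poly p t = 0} \<subseteq> x ` {0..N::nat}"
  shows "p \<noteq> (0 :: real poly)"
proof
  assume "p = 0"
  then have "(UNIV :: real set) \<subseteq> x ` {0..N}" using assms by auto
  then show False using infinite_UNIV_char_0 finite_subset by blast
qed

lemma gauss_legendre_exact:
  assumes GL: "gauss_legendre N x w" and dp: "degree p < 2 * N + 2"
  shows "poly_integral p = quad N x w p"
proof -
  have ir: "interp_rule N x w" and S: "x ` {0..N} = {t. poly (legendre (Suc N)) t = 0}"
    using GL unfolding gauss_legendre_def by auto
  show ?thesis
  proof (rule quad_exact_of_orthogonal_node_poly[OF ir _ degree_legendre _ legendre_orthogonal])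
    show "legendre (Suc N) \<noteq> 0"
      by (rule nonzero_if_roots_among_nodes[of _ x N]) (simp add: S)
    show "poly (legendre (Suc N)) (x j) = 0" if "j \<le> N" for j using S that by auto
  qed (use dp in auto)
qed

lemma gauss_lobatto_exact:
  assumes GLL: "gauss_lobatto N x w" and N1: "N \<ge> 1" and dp: "degree p < 2 * N"
  shows "poly_integral p = quad N x w p"
proof -
  have ir: "interp_rule N x w"
    and S: "x ` {0..N} = {-1, 1} \<union> {t. poly (pderiv (legendre N)) t = 0}"
    using GLL unfolding gauss_lobatto_def by auto
  let ?L = "legendre N"
  have dL: "degree (pderiv ?L) \<le> N - 1"
    using degree_legendre[of N] by (simp add: degree_pderiv)
  show ?thesis
  proof (rule quad_exact_of_orthogonal_node_poly[OF ir, where P = "rodrigues_base * pderiv ?L"])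
    have "pderiv ?L \<noteq> 0"
      by (rule nonzero_if_roots_among_nodes[of _ x N]) (simp add: S subset_insertI2)
    then show "rodrigues_base * pderiv ?L \<noteq> 0" by simp
    show "degree (rodrigues_base * pderiv ?L) \<le> Suc N"
    proof -
      have "degree (rodrigues_base * pderiv ?L) \<le> 2 + degree (pderiv ?L)"
        using degree_mult_le[of rodrigues_base "pderiv ?L"] by simp
      then show ?thesis using dL N1 by linarith
    qed
    show "poly (rodrigues_base * pderiv ?L) (x j) = 0" if "j \<le> N" for j
    proof -
      have "x j \<in> x ` {0..N}" using that by simp
      then have "x j \<in> {-1, 1} \<union> {t. poly (pderiv ?L) t = 0}" by (simp only: S)
      then show ?thesis by (elim UnE insertE) (simp_all add: poly_mult)
    qed
    show "poly_integral (rodrigues_base * pderiv ?L * q) = 0" if dq: "degree q < N - 1" for q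
    proof -
      have "degree (pderiv (rodrigues_base * q)) < N"
        using dq degree_mult_le[of rodrigues_base q] by (simp add: degree_pderiv)
      then have "poly_integral (pderiv ?L * (rodrigues_base * q)) = 0"
        using poly_integral_by_parts[of ?L "rodrigues_base * q"] legendre_orthogonal
        by (simp add: poly_mult)
      then show ?thesis by (simp add: ac_simps)
    qed
  qed (use dp N1 in simp)
qed

text \<open>To see that the weights do not vanish: the test polynomial for node \<open>j\<close> is nonnegative on
  \<open>[-1, 1]\<close> and vanishes at all nodes except \<open>x j\<close>; endpoint nodes enter linearly and interior
  ones squared, which keeps its degree below \<open>2 N\<close> even for Gauss--Lobatto rules.\<close>

definition endpoint_nodes :: "nat \<Rightarrow> (nat \<Rightarrow> real) \<Rightarrow> nat \<Rightarrow> nat set" where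
  "endpoint_nodes N x j = {b \<in> {0..N} - {j}. x b = 1 \<or> x b = -1}"

definition interior_nodes :: "nat \<Rightarrow> (nat \<Rightarrow> real) \<Rightarrow> nat \<Rightarrow> nat set" where
  "interior_nodes N x j = {b \<in> {0..N} - {j}. x b \<noteq> 1 \<and> x b \<noteq> -1}"

definition weight_test_poly :: "nat \<Rightarrow> (nat \<Rightarrow> real) \<Rightarrow> nat \<Rightarrow> real poly" where
  "weight_test_poly N x j =
     (\<Prod>b\<in>endpoint_nodes N x j. [:1, - x b:]) * (\<Prod>b\<in>interior_nodes N x j. [:- x b, 1:]) ^ 2"

lemma card_endpoint_interior_nodes:
  assumes "j \<le> N"
  shows "card (endpoint_nodes N x j) + card (interior_nodes N x j) = N"
proof -
  have union: "endpoint_nodes N x j \<union> interior_nodes N x j = {0..N} - {j}"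
    and disj: "endpoint_nodes N x j \<inter> interior_nodes N x j = {}"
    and fin: "finite (endpoint_nodes N x j)" "finite (interior_nodes N x j)"
    unfolding endpoint_nodes_def interior_nodes_def by auto
  have "card (endpoint_nodes N x j) + card (interior_nodes N x j) = card ({0..N} - {j})"
    using card_Un_disjoint[OF fin disj] unfolding union by simp
  then show ?thesis using assms by simp
qed

lemma degree_weight_test_poly:
  "degree (weight_test_poly N x j) \<le> card (endpoint_nodes N x j) + 2 * card (interior_nodes N x j)"
proof -
  let ?E = "\<Prod>b\<in>endpoint_nodes N x j. [:1, - x b:]"
    and ?I = "\<Prod>b\<in>interior_nodes N x j. [:- x b, 1:]"
  have fin: "finite (endpoint_nodes N x j)" "finite (interior_nodes N x j)"
    unfolding endpoint_nodes_def interior_nodes_def by auto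
  have "degree ?E \<le> card (endpoint_nodes N x j)" using fin(1) by (rule degree_prod_linear_le)
  moreover have "degree ?I \<le> card (interior_nodes N x j)" using fin(2) by (rule degree_prod_linear_le)
  moreover have "degree (weight_test_poly N x j) \<le> degree ?E + degree (?I ^ 2)"
    unfolding weight_test_poly_def by (rule degree_mult_le)
  moreover have "degree (?I ^ 2) \<le> degree ?I * 2" by (rule degree_power_le)
  ultimately show ?thesis by linarith
qed

lemma poly_weight_test_poly:
  "poly (weight_test_poly N x j) t
     = (\<Prod>b\<in>endpoint_nodes N x j. 1 - x b * t) * (\<Prod>b\<in>interior_nodes N x j. t - x b) ^ 2"
  unfolding weight_test_poly_def by (simp add: poly_prod algebra_simps)

lemma weight_test_poly_nonneg: "t \<in> {-1..1} \<Longrightarrow> poly (weight_test_poly N x j) t \<ge> 0"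
  unfolding poly_weight_test_poly
  by (intro mult_nonneg_nonneg prod_nonneg zero_le_power2) (auto simp: endpoint_nodes_def)

lemma weight_test_poly_other_node:
  assumes "b \<le> N" "b \<noteq> j"
  shows "poly (weight_test_poly N x j) (x b) = 0"
proof (cases "x b = 1 \<or> x b = -1")
  case True
  then have "(\<Prod>b'\<in>endpoint_nodes N x j. 1 - x b' * x b) = 0"
    using assms by (intro prod_zero) (auto simp: endpoint_nodes_def)
  then show ?thesis unfolding poly_weight_test_poly by simp
next
  case False
  then have "(\<Prod>b'\<in>interior_nodes N x j. x b - x b') = 0"
    using assms by (intro prod_zero) (auto simp: interior_nodes_def)
  then show ?thesis unfolding poly_weight_test_poly by simp
qed

lemma weight_test_poly_node:
  assumes inj: "inj_on x {0..N}" and j: "j \<le> N"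
  shows "poly (weight_test_poly N x j) (x j) \<noteq> 0"
proof -
  have ne: "x b \<noteq> x j" "x j \<noteq> x b" if "b \<in> {0..N} - {j}" for b
    using inj_on_eq_iff[OF inj] that j by auto
  have fin: "finite (endpoint_nodes N x j)" "finite (interior_nodes N x j)"
    unfolding endpoint_nodes_def interior_nodes_def by auto
  have "\<forall>b\<in>endpoint_nodes N x j. 1 - x b * x j \<noteq> 0"
    using ne unfolding endpoint_nodes_def by (auto simp: algebra_simps)
  moreover have "\<forall>b\<in>interior_nodes N x j. x j - x b \<noteq> 0"
    using ne unfolding interior_nodes_def by auto
  ultimately show ?thesis
    using fin unfolding poly_weight_test_poly by (simp add: prod_zero_iff)
qed

lemma weight_nonzero_if_exact_on_test_poly:
  assumes j: "j \<le> N" and ex: "poly_integral h = quad N x w h"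
    and nonneg: "\<And>t. t \<in> {-1..1} \<Longrightarrow> poly h t \<ge> 0"
    and others: "\<And>b. b \<le> N \<Longrightarrow> b \<noteq> j \<Longrightarrow> poly h (x b) = 0"
    and node: "poly h (x j) \<noteq> 0"
  shows "w j \<noteq> 0"
proof
  assume "w j = 0"
  then have "quad N x w h = 0" unfolding quad_def by (intro sum.neutral) (use others in auto)
  then have "\<forall>t\<in>{-1..1}. poly h t = 0"
    using ex nonneg integral_eq_0_iff[of "-1" 1 "poly h"]
    by (simp add: poly_integral_def continuous_on_poly)
  then have "{-1..1::real} \<subseteq> {t. poly h t = 0}" by auto
  moreover have "finite {t. poly h t = 0}" using node by (intro poly_roots_finite) auto
  ultimately have "finite {-1..1::real}" by (rule finite_subset)
  moreover have "infinite {-1..1::real}" by (rule infinite_Icc) simp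
  ultimately show False by blast
qed

locale gauss_type_rule =
  fixes N :: nat and x w :: "nat \<Rightarrow> real"
  assumes N_pos: "1 \<le> N"
    and nodes_inj: "inj_on x {0..N}"
    and quad_exact: "\<And>p. degree p < 2 * N \<Longrightarrow> poly_integral p = quad N x w p"
    and weights_nonzero: "\<And>j. j \<le> N \<Longrightarrow> w j \<noteq> 0"

lemma gauss_type_ruleI:
  assumes rule: "gauss_legendre N x w \<or> gauss_lobatto N x w" and N1: "N \<ge> 1"
  shows "gauss_type_rule N x w"
proof
  have ir: "interp_rule N x w" using rule unfolding gauss_legendre_def gauss_lobatto_def by auto
  show inj: "inj_on x {0..N}" using ir by (rule interp_rule_inj)
  show "poly_integral p = quad N x w p" if "degree p < 2 * N" for p
    using rule gauss_legendre_exact gauss_lobatto_exact[OF _ N1] that by fastforce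
  show "w j \<noteq> 0" if j: "j \<le> N" for j
  proof (rule weight_nonzero_if_exact_on_test_poly[where h = "weight_test_poly N x j"])
    let ?E = "endpoint_nodes N x j" and ?I = "interior_nodes N x j"
    have dh: "degree (weight_test_poly N x j) \<le> N + card ?I"
      using degree_weight_test_poly[of N x j] card_endpoint_interior_nodes[OF j, of x] by linarith
    show "poly_integral (weight_test_poly N x j) = quad N x w (weight_test_poly N x j)"
    proof (cases "gauss_legendre N x w")
      case True
      have "degree (weight_test_poly N x j) < 2 * N + 2"
        using dh card_endpoint_interior_nodes[OF j, of x] by linarith
      then show ?thesis using gauss_legendre_exact[OF True] by blast
    next
      case False
      then have GLL: "gauss_lobatto N x w" using rule by simp
      then have "{-1, 1} \<subseteq> x ` {0..N}" unfolding gauss_lobatto_def by blast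
      then obtain b1 b2 where b: "b1 \<le> N" "x b1 = 1" "b2 \<le> N" "x b2 = -1" by auto
      have "?E \<noteq> {}" using b unfolding endpoint_nodes_def by (cases "b1 = j") auto
      moreover have "finite ?E" unfolding endpoint_nodes_def by simp
      ultimately have "card ?E \<ge> 1" by (simp add: Suc_le_eq card_gt_0_iff)
      then have "degree (weight_test_poly N x j) < 2 * N"
        using dh card_endpoint_interior_nodes[OF j, of x] by linarith
      then show ?thesis using gauss_lobatto_exact[OF GLL N1] by blast
    qed
  qed (simp_all add: j weight_test_poly_nonneg weight_test_poly_other_node weight_test_poly_node inj)
qed (fact N1)

definition tuples :: "nat \<Rightarrow> (nat \<Rightarrow> 'a set) \<Rightarrow> 'a list set" where
  "tuples d A = {\<alpha>. length \<alpha> = d \<and> (\<forall>l<d. \<alpha> ! l \<in> A l)}"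

lemma bij_betw_tuples_PiE: "bij_betw (\<lambda>\<alpha>. restrict ((!) \<alpha>) {..<d}) (tuples d A) (PiE {..<d} A)"
proof (rule bij_betwI[where g = "\<lambda>f. map f [0..<d]"])
  show "(\<lambda>f. map f [0..<d]) \<in> PiE {..<d} A \<rightarrow> tuples d A"
    unfolding tuples_def by (auto simp: PiE_iff)
  show "map (restrict ((!) \<alpha>) {..<d}) [0..<d] = \<alpha>" if "\<alpha> \<in> tuples d A" for \<alpha>
    using that unfolding tuples_def by (auto intro: nth_equalityI)
  show "restrict ((!) (map f [0..<d])) {..<d} = f" if "f \<in> PiE {..<d} A" for f
    using that by (auto simp: PiE_iff extensional_def)
qed (auto simp: tuples_def)

lemma finite_tuples:
  assumes "\<And>l. l < d \<Longrightarrow> finite (A l)"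
  shows "finite (tuples d A)"
proof -
  have "finite (PiE {..<d} A)" using assms by (intro finite_PiE) auto
  then show ?thesis using bij_betw_finite[OF bij_betw_tuples_PiE] by blast
qed

lemma sum_prod_tuples:
  fixes f :: "nat \<Rightarrow> 'a \<Rightarrow> 'b::comm_semiring_1"
  assumes "\<And>l. l < d \<Longrightarrow> finite (A l)"
  shows "(\<Sum>\<alpha>\<in>tuples d A. \<Prod>l<d. f l (\<alpha> ! l)) = (\<Prod>l<d. \<Sum>b\<in>A l. f l b)"
proof -
  have "(\<Sum>\<alpha>\<in>tuples d A. \<Prod>l<d. f l (\<alpha> ! l))
      = (\<Sum>\<alpha>\<in>tuples d A. (\<lambda>g. \<Prod>l<d. f l (g l)) (restrict ((!) \<alpha>) {..<d}))"
    by simp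
  also have "\<dots> = (\<Sum>g\<in>PiE {..<d} A. \<Prod>l<d. f l (g l))"
    by (rule sum.reindex_bij_betw[OF bij_betw_tuples_PiE])
  also have "\<dots> = (\<Prod>l<d. \<Sum>b\<in>A l. f l b)"
    using assms by (intro prod_sum_PiE[symmetric]) auto
  finally show ?thesis .
qed

lemma vidx_eq_tuples: "vidx d N = tuples d (\<lambda>_. {0..N})"
  unfolding vidx_def tuples_def subset_eq all_set_conv_all_nth by (rule Collect_cong) blast

lemma face_set_eq_tuples:
  assumes "k < d"
  shows "face_set d N k s = tuples d (\<lambda>l. if l = k then {0} else {0..N})"
  unfolding face_set_def vidx_eq_tuples tuples_def using assms by force

lemma vidx_nth: "\<alpha> \<in> vidx d N \<Longrightarrow> l < d \<Longrightarrow> \<alpha> ! l \<le> N"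
  unfolding vidx_eq_tuples tuples_def by auto

lemma vidx_mono: "K \<le> N \<Longrightarrow> vidx d K \<subseteq> vidx d N"
  unfolding vidx_def by auto

lemma finite_vidx: "finite (vidx d N)"
  unfolding vidx_eq_tuples by (rule finite_tuples) simp

lemma finite_face_set: "finite (face_set d N k s)"
  unfolding face_set_def using finite_vidx by simp

lemma face_set_vidx: "\<alpha> \<in> face_set d N k s \<Longrightarrow> \<alpha> \<in> vidx d N"
  unfolding face_set_def by simp

lemma fidx_set_eq_Sigma: "fidx_set d N = Sigma {..<d} (\<lambda>k. Sigma UNIV (face_set d N k))"
  unfolding fidx_set_def by auto

lemma midx_set_eq_Sigma: "midx_set d m = Sigma {..<d} (\<lambda>k. Sigma UNIV (\<lambda>s. {..<m k s}))"
  unfolding midx_set_def by auto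

lemma finite_fidx_set: "finite (fidx_set d N)"
  unfolding fidx_set_eq_Sigma by (intro finite_SigmaI) (auto intro: finite_face_set)

lemma finite_midx_set: "finite (midx_set d m)"
  unfolding midx_set_eq_Sigma by (intro finite_SigmaI) auto

lemma sum_fidx_set:
  "(\<Sum>f\<in>fidx_set d N. F f) = (\<Sum>k<d. \<Sum>s\<in>UNIV. \<Sum>\<alpha>\<in>face_set d N k s. F (k, s, \<alpha>))"
  unfolding fidx_set_eq_Sigma by (simp add: sum.Sigma finite_face_set split_def)

lemma sum_midx_set: "(\<Sum>\<mu>\<in>midx_set d m. F \<mu>) = (\<Sum>k<d. \<Sum>s\<in>UNIV. \<Sum>j<m k s. F (k, s, j))"
  unfolding midx_set_eq_Sigma by (simp add: sum.Sigma split_def)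

lemma sum_hidx_set:
  "(\<Sum>h\<in>hidx_set d N m. F h)
     = (\<Sum>\<beta>\<in>vidx d N. F (HV \<beta>)) + (\<Sum>f\<in>fidx_set d N. F (HF f)) + (\<Sum>\<mu>\<in>midx_set d m. F (HM \<mu>))"
  unfolding hidx_set_def
  by (subst sum.union_disjoint; (subst sum.union_disjoint)?)
    (auto simp: finite_vidx finite_fidx_set finite_midx_set sum.reindex inj_on_def)

definition tensor_monomial :: "nat \<Rightarrow> nat list \<Rightarrow> (nat \<Rightarrow> real) \<Rightarrow> real" where
  "tensor_monomial d \<gamma> p = (\<Prod>l<d. p l ^ (\<gamma> ! l))"

definition tensor_monomial_deriv :: "nat \<Rightarrow> nat list \<Rightarrow> nat \<Rightarrow> (nat \<Rightarrow> real) \<Rightarrow> real" where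
  "tensor_monomial_deriv d \<gamma> i p =
     (\<Prod>l<d. if l = i then of_nat (\<gamma> ! i) * p i ^ (\<gamma> ! i - 1) else p l ^ (\<gamma> ! l))"

lemma prod_lessThan_if_eq:
  fixes F :: "nat \<Rightarrow> 'b::comm_monoid_mult"
  assumes "i < d"
  shows "(\<Prod>l<d. if l = i then X else F l) = X * (\<Prod>l\<in>{..<d} - {i}. F l)"
proof -
  have "(\<Prod>l<d. if l = i then X else F l)
      = X * (\<Prod>l\<in>{..<d} - {i}. if l = i then X else F l)"
    using assms by (subst prod.remove[of _ i]) auto
  also have "(\<Prod>l\<in>{..<d} - {i}. if l = i then X else F l) = (\<Prod>l\<in>{..<d} - {i}. F l)"
    by (intro prod.cong) auto
  finally show ?thesis .
qed

lemma tensor_monomial_split: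
  "k < d \<Longrightarrow> tensor_monomial d \<gamma> p = p k ^ (\<gamma> ! k) * (\<Prod>l\<in>{..<d} - {k}. p l ^ (\<gamma> ! l))"
  unfolding tensor_monomial_def by (rule prod.remove) auto

lemma tensor_monomial_vnode:
  "tensor_monomial d \<gamma> (vnode d x \<beta>) = (\<Prod>l<d. x (\<beta> ! l) ^ (\<gamma> ! l))"
  unfolding tensor_monomial_def vnode_def by (intro prod.cong) auto

lemma tensor_monomial_has_real_derivative:
  assumes i: "i < d"
  shows "((\<lambda>t. tensor_monomial d \<gamma> (p(i := t))) has_real_derivative tensor_monomial_deriv d \<gamma> i p)
           (at (p i))"
proof -
  define R where "R = (\<Prod>l\<in>{..<d} - {i}. p l ^ (\<gamma> ! l))"
  have "tensor_monomial d \<gamma> (p(i := t)) = R * t ^ (\<gamma> ! i)" for t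
    unfolding tensor_monomial_split[OF i] R_def by (auto intro!: prod.cong)
  moreover have "tensor_monomial_deriv d \<gamma> i p = R * (of_nat (\<gamma> ! i) * p i ^ (\<gamma> ! i - 1))"
    unfolding tensor_monomial_deriv_def prod_lessThan_if_eq[OF i] R_def by simp
  ultimately show ?thesis by (simp add: DERIV_cmult DERIV_pow)
qed

lemma partial_deriv_sum_tensor_monomial:
  assumes i: "i < d" and g: "\<And>p. g p = (\<Sum>\<gamma>\<in>G. c \<gamma> * tensor_monomial d \<gamma> p)"
  shows "partial_deriv g i p = (\<Sum>\<gamma>\<in>G. c \<gamma> * tensor_monomial_deriv d \<gamma> i p)"
proof -
  have "((\<lambda>t. \<Sum>\<gamma>\<in>G. c \<gamma> * tensor_monomial d \<gamma> (p(i := t)))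
         has_real_derivative (\<Sum>\<gamma>\<in>G. c \<gamma> * tensor_monomial_deriv d \<gamma> i p)) (at (p i))"
    by (intro DERIV_sum DERIV_cmult tensor_monomial_has_real_derivative[OF i])
  then show ?thesis unfolding partial_deriv_def g by (rule DERIV_imp_deriv)
qed

lemma sum_mult_sum_tensor_monomial:
  assumes "\<And>p. g p = (\<Sum>\<gamma>\<in>G. c \<gamma> * tensor_monomial d \<gamma> p)"
  shows "(\<Sum>a\<in>A. u a * g (p a)) = (\<Sum>\<gamma>\<in>G. c \<gamma> * (\<Sum>a\<in>A. u a * tensor_monomial d \<gamma> (p a)))"
  unfolding assms sum_distrib_left by (subst sum.swap) (simp add: mult_ac)

lemma prod_face_coords_sum:
  fixes f :: "nat \<Rightarrow> nat \<Rightarrow> real"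
  assumes k: "k < d"
  shows "(\<Prod>l\<in>{..<d} - {k}. \<Sum>e\<le>M. f l e)
       = (\<Sum>\<gamma>\<in>tuples d (\<lambda>l. if l = k then {0} else {0..M}). \<Prod>l\<in>{..<d} - {k}. f l (\<gamma> ! l))"
proof -
  have "(\<Prod>l\<in>{..<d} - {k}. \<Sum>e\<le>M. f l e) = (\<Prod>l<d. if l = k then 1 else \<Sum>e\<le>M. f l e)"
    using prod_lessThan_if_eq[OF k, of 1 "\<lambda>l. \<Sum>e\<le>M. f l e"] by simp
  also have "\<dots> = (\<Prod>l<d. \<Sum>e\<in>(if l = k then {0} else {0..M}). if l = k then 1 else f l e)"
    by (intro prod.cong refl) (auto simp: atLeast0AtMost)
  also have "\<dots> = (\<Sum>\<gamma>\<in>tuples d (\<lambda>l. if l = k then {0} else {0..M}).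
                     \<Prod>l<d. if l = k then 1 else f l (\<gamma> ! l))"
    by (rule sum_prod_tuples[symmetric]) auto
  also have "\<dots> = (\<Sum>\<gamma>\<in>tuples d (\<lambda>l. if l = k then {0} else {0..M}). \<Prod>l\<in>{..<d} - {k}. f l (\<gamma> ! l))"
    by (simp add: prod_lessThan_if_eq[OF k])
  finally show ?thesis .
qed

lemma poly_eq_sum_coeff:
  fixes p :: "real poly"
  assumes "degree p \<le> M"
  shows "poly p t = (\<Sum>e\<le>M. coeff p e * t ^ e)"
proof -
  have "poly p t = (\<Sum>e\<le>degree p. coeff p e * t ^ e)" by (rule poly_altdef)
  also have "\<dots> = (\<Sum>e\<le>M. coeff p e * t ^ e)"
    using assms by (intro sum.mono_neutral_left) (auto simp: coeff_eq_0)
  finally show ?thesis .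
qed

lemma face_quad_exact_prod_poly:
  fixes wt :: "'a \<Rightarrow> real" and pt :: "'a \<Rightarrow> nat \<Rightarrow> real"
  assumes exact: "face_quad_exact d k M S wt pt" and S: "finite S" and k: "k < d"
    and deg: "\<And>l. l \<in> {..<d} - {k} \<Longrightarrow> degree (P l) \<le> M"
  shows "(\<Sum>s\<in>S. wt s * (\<Prod>l\<in>{..<d} - {k}. poly (P l) (pt s l)))
       = (\<Prod>l\<in>{..<d} - {k}. poly_integral (P l))"
proof -
  let ?L = "{..<d} - {k}" and ?G = "tuples d (\<lambda>l. if l = k then {0} else {0..M})"
  let ?I = "\<lambda>e. integral {-1..1} (\<lambda>t::real. t ^ e)"
  have "(\<Sum>s\<in>S. wt s * (\<Prod>l\<in>?L. poly (P l) (pt s l)))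
      = (\<Sum>s\<in>S. wt s * (\<Prod>l\<in>?L. \<Sum>e\<le>M. coeff (P l) e * pt s l ^ e))"
    using deg by (intro sum.cong refl arg_cong2[where f = "(*)"] prod.cong poly_eq_sum_coeff) auto
  also have "\<dots> = (\<Sum>s\<in>S. wt s * (\<Sum>\<gamma>\<in>?G. \<Prod>l\<in>?L. coeff (P l) (\<gamma> ! l) * pt s l ^ (\<gamma> ! l)))"
    by (simp only: prod_face_coords_sum[OF k])
  also have "\<dots> = (\<Sum>\<gamma>\<in>?G. (\<Prod>l\<in>?L. coeff (P l) (\<gamma> ! l))
                            * (\<Sum>s\<in>S. wt s * (\<Prod>l\<in>?L. pt s l ^ (\<gamma> ! l))))"
    unfolding sum_distrib_left prod.distrib by (subst sum.swap) (simp add: mult_ac)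
  also have "\<dots> = (\<Sum>\<gamma>\<in>?G. (\<Prod>l\<in>?L. coeff (P l) (\<gamma> ! l)) * (\<Prod>l\<in>?L. ?I (\<gamma> ! l)))"
  proof (intro sum.cong refl arg_cong2[where f = "(*)"])
    fix \<gamma> assume "\<gamma> \<in> ?G"
    then have "\<gamma> \<in> vidx d M"
      using face_set_vidx face_set_eq_tuples[OF k, of M True] by blast
    then show "(\<Sum>s\<in>S. wt s * (\<Prod>l\<in>?L. pt s l ^ (\<gamma> ! l))) = (\<Prod>l\<in>?L. ?I (\<gamma> ! l))"
      using exact unfolding face_quad_exact_def by blast
  qed
  also have "\<dots> = (\<Prod>l\<in>?L. \<Sum>e\<le>M. coeff (P l) e * ?I e)"
    unfolding prod_face_coords_sum[OF k] prod.distrib ..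
  also have "\<dots> = (\<Prod>l\<in>?L. poly_integral (P l))"
    using deg by (intro prod.cong refl poly_integral_eq_sum_coeff[symmetric]) auto
  finally show ?thesis .
qed

definition Bface :: "nat \<Rightarrow> (nat \<Rightarrow> real) \<Rightarrow> nat \<Rightarrow> fidx \<Rightarrow> real" where
  "Bface d w i f = nrm i (fst f) (fst (snd f)) * fweight d w f"

lemma M1D_row:
  assumes "a \<le> N"
  shows "(\<Sum>b\<le>N. M1D w a b * f b) = w a * f a"
proof -
  have "(\<Sum>b\<le>N. M1D w a b * f b) = (\<Sum>b\<le>N. if b = a then w a * f a else 0)"
    by (intro sum.cong) (auto simp: M1D_def)
  then show ?thesis using assms by simp
qed

lemma M1D_col:
  assumes "a \<le> N"
  shows "(\<Sum>b\<le>N. M1D w b a * f b) = w a * f a"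
proof -
  have "(\<Sum>b\<le>N. M1D w b a * f b) = (\<Sum>b\<le>N. if b = a then w a * f a else 0)"
    by (intro sum.cong) (auto simp: M1D_def)
  then show ?thesis using assms by simp
qed

lemma sum_vidx_prod:
  "(\<Sum>\<beta>\<in>vidx d N. \<Prod>l<d. f l (\<beta> ! l)) = (\<Prod>l<d. \<Sum>b\<le>N. (f l b :: real))"
  unfolding vidx_eq_tuples by (subst sum_prod_tuples) (auto simp: atLeast0AtMost)

lemma sum_face_delta:
  fixes s :: bool and d k :: nat
  assumes "k < d"
  shows "(\<Sum>k'<d. \<Sum>s'\<in>UNIV. if k' = k \<and> s' = s then G else 0) = (G :: real)"
proof -
  have "(\<Sum>s'\<in>UNIV. if k' = k \<and> s' = s then G else 0) = (if k' = k then G else 0)" for k'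
    by (cases s) (auto simp: UNIV_bool)
  then have "(\<Sum>k'<d. \<Sum>s'\<in>UNIV. if k' = k \<and> s' = s then G else 0) = (\<Sum>k'<d. if k' = k then G else 0)"
    by simp
  also have "\<dots> = G" using assms by (subst sum.delta) auto
  finally show ?thesis .
qed

lemma face_quad_lagrange_monomial:
  fixes wt :: "'a \<Rightarrow> real" and pt :: "'a \<Rightarrow> nat \<Rightarrow> real"
  assumes exact: "face_quad_exact d k M S wt pt" and S: "finite S" and k: "k < d"
    and on_face: "\<And>s. s \<in> S \<Longrightarrow> pt s k = c"
    and \<alpha>: "\<alpha> \<in> vidx d N" and \<gamma>: "\<gamma> \<in> vidx d K" and M: "N + K \<le> M"
  shows "(\<Sum>s\<in>S. wt s * (lag_tensor N x ({..<d} - {k}) \<alpha> (pt s) * tensor_monomial d \<gamma> (pt s)))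
       = c ^ (\<gamma> ! k)
         * (\<Prod>l\<in>{..<d} - {k}. poly_integral (lagrange_poly N x (\<alpha> ! l) * monom 1 (\<gamma> ! l)))"
proof -
  let ?L = "{..<d} - {k}" and ?P = "\<lambda>l. lagrange_poly N x (\<alpha> ! l) * monom 1 (\<gamma> ! l)"
  have "lag_tensor N x ?L \<alpha> (pt s) * tensor_monomial d \<gamma> (pt s)
      = c ^ (\<gamma> ! k) * (\<Prod>l\<in>?L. poly (?P l) (pt s l))" if "s \<in> S" for s
    unfolding tensor_monomial_split[OF k] lag_tensor_def on_face[OF that]
    by (simp add: poly_lagrange_poly poly_monom prod.distrib mult_ac)
  then have "(\<Sum>s\<in>S. wt s * (lag_tensor N x ?L \<alpha> (pt s) * tensor_monomial d \<gamma> (pt s)))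
      = c ^ (\<gamma> ! k) * (\<Sum>s\<in>S. wt s * (\<Prod>l\<in>?L. poly (?P l) (pt s l)))"
    by (simp add: sum_distrib_left mult_ac)
  also have "(\<Sum>s\<in>S. wt s * (\<Prod>l\<in>?L. poly (?P l) (pt s l))) = (\<Prod>l\<in>?L. poly_integral (?P l))"
  proof (rule face_quad_exact_prod_poly[OF exact S k])
    fix l assume "l \<in> ?L"
    then have "degree (lagrange_poly N x (\<alpha> ! l)) \<le> N" "\<gamma> ! l \<le> K"
      using degree_lagrange_poly vidx_nth \<alpha> \<gamma> by auto
    then show "degree (?P l) \<le> M"
      using M degree_mult_le[of "lagrange_poly N x (\<alpha> ! l)" "monom 1 (\<gamma> ! l)"]
      by (simp add: degree_monom_eq)
  qed
  finally show ?thesis .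
qed

context gauss_type_rule
begin

lemma Q1D_row_power:
  assumes "e \<le> N"
  shows "(\<Sum>b\<le>N. Q1D N x w a b * x b ^ e) = w a * (of_nat e * x a ^ (e - 1))"
proof -
  have "(\<Sum>b\<le>N. Q1D N x w a b * x b ^ e) = w a * (\<Sum>b\<le>N. deriv (lagrange N x b) (x a) * x b ^ e)"
    unfolding Q1D_def by (simp add: sum_distrib_left mult.assoc)
  then show ?thesis using sum_deriv_lagrange_power[OF nodes_inj assms] by simp
qed

text \<open>Summation by parts in one dimension: the quadrature computes the integral of
  \<open>\<ell>\<^sub>a' t\<^sup>e\<close> exactly, and integrating by parts moves the derivative onto \<open>t\<^sup>e\<close>.\<close>

lemma Q1D_col_power:
  assumes a: "a \<le> N" and e: "e \<le> N"
  shows "(\<Sum>b\<le>N. Q1D N x w b a * x b ^ e)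
         = lagrange N x a 1 - lagrange N x a (-1) * (-1) ^ e - w a * (of_nat e * x a ^ (e - 1))"
proof -
  let ?L = "lagrange_poly N x a" and ?M = "monom (1::real) e"
  have dL: "degree ?L \<le> N" using degree_lagrange_poly[OF a] .
  have dM: "degree ?M \<le> e" by (simp add: degree_monom_le)
  have "(\<Sum>b\<le>N. Q1D N x w b a * x b ^ e) = quad N x w (pderiv ?L * ?M)"
    unfolding Q1D_def quad_def by (simp add: deriv_lagrange poly_monom mult.assoc)
  also have "\<dots> = poly_integral (pderiv ?L * ?M)"
  proof (rule quad_exact[symmetric])
    have "degree (pderiv ?L * ?M) \<le> (N - 1) + e"
      using dL dM degree_mult_le[of "pderiv ?L" ?M] by (simp add: degree_pderiv)
    then show "degree (pderiv ?L * ?M) < 2 * N" using N_pos e by linarith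
  qed
  also have "\<dots> = poly (?L * ?M) 1 - poly (?L * ?M) (-1) - poly_integral (?L * pderiv ?M)"
    by (rule poly_integral_by_parts)
  also have "poly_integral (?L * pderiv ?M) = quad N x w (?L * pderiv ?M)"
  proof (rule quad_exact)
    have "degree (?L * pderiv ?M) \<le> N + (e - 1)"
      using dL dM degree_mult_le[of ?L "pderiv ?M"] by (simp add: degree_pderiv)
    then show "degree (?L * pderiv ?M) < 2 * N" using N_pos e by linarith
  qed
  also have "\<dots> = (\<Sum>b\<le>N. lagrange N x a (x b) * (w b * (of_nat e * x b ^ (e - 1))))"
    unfolding quad_def by (simp add: poly_lagrange_poly pderiv_monom poly_monom algebra_simps)
  also have "\<dots> = w a * (of_nat e * x a ^ (e - 1))" by (rule sum_lagrange_node[OF nodes_inj a])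
  finally show ?thesis by (simp add: poly_lagrange_poly poly_monom)
qed

lemma lag_tensor_interpolates_monomial:
  assumes \<gamma>: "\<gamma> \<in> vidx d N"
  shows "(\<Sum>\<beta>\<in>vidx d N. lag_tensor N x {..<d} \<beta> p * tensor_monomial d \<gamma> (vnode d x \<beta>))
       = tensor_monomial d \<gamma> p"
proof -
  have "(\<Sum>\<beta>\<in>vidx d N. lag_tensor N x {..<d} \<beta> p * tensor_monomial d \<gamma> (vnode d x \<beta>))
      = (\<Prod>l<d. \<Sum>b\<le>N. lagrange N x b (p l) * x b ^ (\<gamma> ! l))"
    unfolding lag_tensor_def tensor_monomial_vnode prod.distrib[symmetric] by (rule sum_vidx_prod)
  also have "\<dots> = tensor_monomial d \<gamma> p"
    unfolding tensor_monomial_def using vidx_nth[OF \<gamma>]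
    by (intro prod.cong refl sum_lagrange_power[OF nodes_inj]) auto
  finally show ?thesis .
qed

lemma face_lag_tensor_interpolates_monomial:
  assumes \<gamma>: "\<gamma> \<in> vidx d N" and k: "k < d" and pk: "p k = sgn_face s"
  shows "(\<Sum>\<alpha>\<in>face_set d N k s. lag_tensor N x ({..<d} - {k}) \<alpha> p * tensor_monomial d \<gamma> (fnode d x (k, s, \<alpha>)))
       = tensor_monomial d \<gamma> p"
proof -
  let ?F = "\<lambda>l b. if l = k then sgn_face s ^ (\<gamma> ! k) else lagrange N x b (p l) * x b ^ (\<gamma> ! l)"
  have "lag_tensor N x ({..<d} - {k}) \<alpha> p * tensor_monomial d \<gamma> (fnode d x (k, s, \<alpha>))
      = (\<Prod>l<d. ?F l (\<alpha> ! l))" for \<alpha>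
  proof -
    have L: "lag_tensor N x ({..<d} - {k}) \<alpha> p = (\<Prod>l<d. if l = k then 1 else lagrange N x (\<alpha> ! l) (p l))"
      using prod_lessThan_if_eq[OF k, of 1 "\<lambda>l. lagrange N x (\<alpha> ! l) (p l)"] by (simp add: lag_tensor_def)
    have T: "tensor_monomial d \<gamma> (fnode d x (k, s, \<alpha>))
        = (\<Prod>l<d. if l = k then sgn_face s ^ (\<gamma> ! k) else x (\<alpha> ! l) ^ (\<gamma> ! l))"
      unfolding tensor_monomial_def fnode_def by (intro prod.cong) auto
    show ?thesis unfolding L T prod.distrib[symmetric] by (intro prod.cong) auto
  qed
  then have "(\<Sum>\<alpha>\<in>face_set d N k s. lag_tensor N x ({..<d} - {k}) \<alpha> p * tensor_monomial d \<gamma> (fnode d x (k, s, \<alpha>)))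
      = (\<Sum>\<alpha>\<in>tuples d (\<lambda>l. if l = k then {0} else {0..N}). \<Prod>l<d. ?F l (\<alpha> ! l))"
    unfolding face_set_eq_tuples[OF k] by simp
  also have "\<dots> = (\<Prod>l<d. \<Sum>b\<in>(if l = k then {0} else {0..N}). ?F l b)"
    by (rule sum_prod_tuples) auto
  also have "\<dots> = (\<Prod>l<d. if l = k then sgn_face s ^ (\<gamma> ! k) else p l ^ (\<gamma> ! l))"
    using vidx_nth[OF \<gamma>] sum_lagrange_power[OF nodes_inj]
    by (intro prod.cong refl) (auto simp: atLeast0AtMost)
  also have "\<dots> = tensor_monomial d \<gamma> p"
    unfolding tensor_monomial_def using pk by (intro prod.cong) auto
  finally show ?thesis .
qed

lemma lag_tensor_face_node:
  assumes "\<alpha> \<in> face_set d N k s" "\<alpha>' \<in> face_set d N k s"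
  shows "lag_tensor N x ({..<d} - {k}) \<alpha> (fnode d x (k, s, \<alpha>')) = (if \<alpha>' = \<alpha> then 1 else 0)"
proof -
  have len: "length \<alpha> = d" "length \<alpha>' = d" and k0: "\<alpha> ! k = 0" "\<alpha>' ! k = 0"
    and le: "\<And>l. l < d \<Longrightarrow> \<alpha> ! l \<le> N \<and> \<alpha>' ! l \<le> N"
    using assms vidx_nth unfolding face_set_def vidx_def by auto
  have node: "lagrange N x (\<alpha> ! l) (fnode d x (k, s, \<alpha>') l) = (if \<alpha>' ! l = \<alpha> ! l then 1 else 0)"
    if "l \<in> {..<d} - {k}" for l
    using that le[of l] by (simp add: fnode_def lagrange_node[OF nodes_inj])
  show ?thesis
  proof (cases "\<alpha>' = \<alpha>")
    case True
    then have "\<forall>l\<in>{..<d} - {k}. lagrange N x (\<alpha> ! l) (fnode d x (k, s, \<alpha>') l) = 1"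
      using node by simp
    then show ?thesis using True unfolding lag_tensor_def by (simp add: prod.neutral)
  next
    case False
    then obtain l where "l < d" "\<alpha>' ! l \<noteq> \<alpha> ! l" using len nth_equalityI by metis
    with k0 have "l \<in> {..<d} - {k}" "\<alpha>' ! l \<noteq> \<alpha> ! l" by auto
    then have "\<exists>l\<in>{..<d} - {k}. lagrange N x (\<alpha> ! l) (fnode d x (k, s, \<alpha>') l) = 0"
      using node by auto
    then show ?thesis using False unfolding lag_tensor_def by (simp add: prod_zero)
  qed
qed

lemma Mvol_tensor_monomial_deriv:
  assumes i: "i < d"
  shows "Mvol d w \<alpha> * tensor_monomial_deriv d \<gamma> i (vnode d x \<alpha>)
       = w (\<alpha> ! i) * (of_nat (\<gamma> ! i) * x (\<alpha> ! i) ^ (\<gamma> ! i - 1))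
         * (\<Prod>l\<in>{..<d} - {i}. w (\<alpha> ! l) * x (\<alpha> ! l) ^ (\<gamma> ! l))"
proof -
  have "Mvol d w \<alpha> * tensor_monomial_deriv d \<gamma> i (vnode d x \<alpha>)
      = (\<Prod>l<d. if l = i then w (\<alpha> ! i) * (of_nat (\<gamma> ! i) * x (\<alpha> ! i) ^ (\<gamma> ! i - 1))
                 else w (\<alpha> ! l) * x (\<alpha> ! l) ^ (\<gamma> ! l))"
    unfolding Mvol_def tensor_monomial_deriv_def prod.distrib[symmetric]
    by (intro prod.cong) (auto simp: vnode_def)
  then show ?thesis by (simp add: prod_lessThan_if_eq[OF i])
qed

lemma Qvol_apply_monomial:
  assumes \<gamma>: "\<gamma> \<in> vidx d N" and \<alpha>: "\<alpha> \<in> vidx d N" and i: "i < d"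
  shows "(\<Sum>\<beta>\<in>vidx d N. Qvol d N x w i \<alpha> \<beta> * tensor_monomial d \<gamma> (vnode d x \<beta>))
       = Mvol d w \<alpha> * tensor_monomial_deriv d \<gamma> i (vnode d x \<alpha>)"
proof -
  have "(\<Sum>\<beta>\<in>vidx d N. Qvol d N x w i \<alpha> \<beta> * tensor_monomial d \<gamma> (vnode d x \<beta>))
      = (\<Prod>l<d. \<Sum>b\<le>N. (if l = i then Q1D N x w (\<alpha> ! l) b else M1D w (\<alpha> ! l) b) * x b ^ (\<gamma> ! l))"
    unfolding Qvol_def tensor_monomial_vnode prod.distrib[symmetric] by (rule sum_vidx_prod)
  also have "\<dots> = (\<Prod>l<d. if l = i then w (\<alpha> ! i) * (of_nat (\<gamma> ! i) * x (\<alpha> ! i) ^ (\<gamma> ! i - 1))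
                           else w (\<alpha> ! l) * x (\<alpha> ! l) ^ (\<gamma> ! l))"
    using vidx_nth[OF \<alpha>] vidx_nth[OF \<gamma>] Q1D_row_power M1D_row by (intro prod.cong refl) auto
  also have "\<dots> = Mvol d w \<alpha> * tensor_monomial_deriv d \<gamma> i (vnode d x \<alpha>)"
    by (simp add: prod_lessThan_if_eq[OF i] Mvol_tensor_monomial_deriv[OF i])
  finally show ?thesis .
qed

lemma face_sum_Emat_monomial:
  assumes \<alpha>: "\<alpha> \<in> vidx d N" and i: "i < d"
  shows "(\<Sum>\<alpha>'\<in>face_set d N i s. Emat d N x (i, s, \<alpha>') \<alpha> * fweight d w (i, s, \<alpha>')
            * tensor_monomial d \<gamma> (fnode d x (i, s, \<alpha>')))
       = lagrange N x (\<alpha> ! i) (sgn_face s) * sgn_face s ^ (\<gamma> ! i)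
         * (\<Prod>l\<in>{..<d} - {i}. w (\<alpha> ! l) * x (\<alpha> ! l) ^ (\<gamma> ! l))"
proof -
  define \<phi> where "\<phi> l b = (if l = i then lagrange N x (\<alpha> ! i) (sgn_face s) * sgn_face s ^ (\<gamma> ! i)
                 else lagrange N x (\<alpha> ! l) (x b) * w b * x b ^ (\<gamma> ! l))" for l b
  have "Emat d N x (i, s, \<alpha>') \<alpha> * fweight d w (i, s, \<alpha>') * tensor_monomial d \<gamma> (fnode d x (i, s, \<alpha>'))
      = (\<Prod>l<d. \<phi> l (\<alpha>' ! l))" for \<alpha>'
  proof -
    have E: "Emat d N x (i, s, \<alpha>') \<alpha>
        = (\<Prod>l<d. if l = i then lagrange N x (\<alpha> ! i) (sgn_face s) else lagrange N x (\<alpha> ! l) (x (\<alpha>' ! l)))"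
      unfolding Emat_def lag_tensor_def fnode_def by (intro prod.cong) auto
    have W: "fweight d w (i, s, \<alpha>') = (\<Prod>l<d. if l = i then 1 else w (\<alpha>' ! l))"
      unfolding fweight_def using prod_lessThan_if_eq[OF i, of 1 "\<lambda>l. w (\<alpha>' ! l)"] by simp
    have T: "tensor_monomial d \<gamma> (fnode d x (i, s, \<alpha>'))
        = (\<Prod>l<d. if l = i then sgn_face s ^ (\<gamma> ! i) else x (\<alpha>' ! l) ^ (\<gamma> ! l))"
      unfolding tensor_monomial_def fnode_def by (intro prod.cong) auto
    show ?thesis unfolding E W T prod.distrib[symmetric] \<phi>_def by (intro prod.cong) auto
  qed
  then have "(\<Sum>\<alpha>'\<in>face_set d N i s. Emat d N x (i, s, \<alpha>') \<alpha> * fweight d w (i, s, \<alpha>')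
            * tensor_monomial d \<gamma> (fnode d x (i, s, \<alpha>')))
      = (\<Sum>\<alpha>'\<in>tuples d (\<lambda>l. if l = i then {0} else {0..N}). \<Prod>l<d. \<phi> l (\<alpha>' ! l))"
    unfolding face_set_eq_tuples[OF i] by simp
  also have "\<dots> = (\<Prod>l<d. \<Sum>b\<in>(if l = i then {0} else {0..N}). \<phi> l b)"
    by (rule sum_prod_tuples) auto
  also have "\<dots> = (\<Prod>l<d. if l = i then lagrange N x (\<alpha> ! i) (sgn_face s) * sgn_face s ^ (\<gamma> ! i)
                 else w (\<alpha> ! l) * x (\<alpha> ! l) ^ (\<gamma> ! l))"
    using vidx_nth[OF \<alpha>] sum_lagrange_node[OF nodes_inj, of _ "\<lambda>b. w b * x b ^ _"]
    unfolding \<phi>_def by (intro prod.cong refl) (auto simp: atLeast0AtMost mult.assoc)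
  finally show ?thesis by (simp add: prod_lessThan_if_eq[OF i])
qed

lemma Bface_apply_monomial:
  assumes \<alpha>: "\<alpha> \<in> vidx d N" and i: "i < d"
  shows "(\<Sum>f\<in>fidx_set d N. Emat d N x f \<alpha> * Bface d w i f * tensor_monomial d \<gamma> (fnode d x f))
       = (lagrange N x (\<alpha> ! i) 1 - lagrange N x (\<alpha> ! i) (-1) * (-1) ^ (\<gamma> ! i))
         * (\<Prod>l\<in>{..<d} - {i}. w (\<alpha> ! l) * x (\<alpha> ! l) ^ (\<gamma> ! l))"
proof -
  define T where "T s = (\<Sum>\<alpha>'\<in>face_set d N i s. Emat d N x (i, s, \<alpha>') \<alpha> * fweight d w (i, s, \<alpha>')
                           * tensor_monomial d \<gamma> (fnode d x (i, s, \<alpha>')))" for s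
  have "(\<Sum>f\<in>fidx_set d N. Emat d N x f \<alpha> * Bface d w i f * tensor_monomial d \<gamma> (fnode d x f))
      = (\<Sum>k<d. if k = i then (\<Sum>s\<in>UNIV. sgn_face s * T s) else 0)"
    unfolding sum_fidx_set T_def Bface_def nrm_def
    by (intro sum.cong refl) (auto simp: sum_distrib_left mult_ac)
  also have "\<dots> = T True - T False" using i by (simp add: UNIV_bool sgn_face_def)
  finally show ?thesis
    unfolding T_def face_sum_Emat_monomial[OF \<alpha> i] by (simp add: sgn_face_def algebra_simps)
qed

text \<open>Summation by parts: \<open>Q\<^sub>i + Q\<^sub>i\<^sup>T = E\<^sup>T B\<^sub>i E\<close> on tensor monomials of degree at most \<open>N\<close>.\<close>

lemma Qvol_transpose_apply_monomial:
  assumes \<gamma>: "\<gamma> \<in> vidx d N" and \<alpha>: "\<alpha> \<in> vidx d N" and i: "i < d"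
  shows "(\<Sum>\<beta>\<in>vidx d N. Qvol d N x w i \<beta> \<alpha> * tensor_monomial d \<gamma> (vnode d x \<beta>))
       = (\<Sum>f\<in>fidx_set d N. Emat d N x f \<alpha> * Bface d w i f * tensor_monomial d \<gamma> (fnode d x f))
         - Mvol d w \<alpha> * tensor_monomial_deriv d \<gamma> i (vnode d x \<alpha>)"
proof -
  have "(\<Sum>\<beta>\<in>vidx d N. Qvol d N x w i \<beta> \<alpha> * tensor_monomial d \<gamma> (vnode d x \<beta>))
      = (\<Prod>l<d. \<Sum>b\<le>N. (if l = i then Q1D N x w b (\<alpha> ! l) else M1D w b (\<alpha> ! l)) * x b ^ (\<gamma> ! l))"
    unfolding Qvol_def tensor_monomial_vnode prod.distrib[symmetric] by (rule sum_vidx_prod)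
  also have "\<dots> = (\<Prod>l<d. if l = i then lagrange N x (\<alpha> ! i) 1 - lagrange N x (\<alpha> ! i) (-1) * (-1) ^ (\<gamma> ! i)
                               - w (\<alpha> ! i) * (of_nat (\<gamma> ! i) * x (\<alpha> ! i) ^ (\<gamma> ! i - 1))
                           else w (\<alpha> ! l) * x (\<alpha> ! l) ^ (\<gamma> ! l))"
    using vidx_nth[OF \<alpha>] vidx_nth[OF \<gamma>] Q1D_col_power M1D_col by (intro prod.cong refl) auto
  also have "\<dots> = (lagrange N x (\<alpha> ! i) 1 - lagrange N x (\<alpha> ! i) (-1) * (-1) ^ (\<gamma> ! i))
                     * (\<Prod>l\<in>{..<d} - {i}. w (\<alpha> ! l) * x (\<alpha> ! l) ^ (\<gamma> ! l))
                   - w (\<alpha> ! i) * (of_nat (\<gamma> ! i) * x (\<alpha> ! i) ^ (\<gamma> ! i - 1))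
                     * (\<Prod>l\<in>{..<d} - {i}. w (\<alpha> ! l) * x (\<alpha> ! l) ^ (\<gamma> ! l))"
    by (simp add: prod_lessThan_if_eq[OF i] algebra_simps)
  finally show ?thesis unfolding Bface_apply_monomial[OF \<alpha> i] Mvol_tensor_monomial_deriv[OF i] .
qed

lemma Emf_interpolates_monomial:
  assumes \<gamma>: "\<gamma> \<in> vidx d N" and mortar: "mortar_on_faces d m y" and \<mu>: "\<mu> \<in> midx_set d m"
  shows "(\<Sum>f\<in>fidx_set d N. Emf d N x y \<mu> f * tensor_monomial d \<gamma> (fnode d x f))
       = tensor_monomial d \<gamma> (mpoint y \<mu>)"
proof -
  obtain k s j where \<mu>_eq: "\<mu> = (k, s, j)" and k: "k < d" and j: "j < m k s"
    using \<mu> unfolding midx_set_def by auto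
  have on_face: "y k s j k = sgn_face s" using mortar k j unfolding mortar_on_faces_def by blast
  define G where "G = (\<Sum>\<alpha>\<in>face_set d N k s. lag_tensor N x ({..<d} - {k}) \<alpha> (y k s j)
                         * tensor_monomial d \<gamma> (fnode d x (k, s, \<alpha>)))"
  have "(\<Sum>f\<in>fidx_set d N. Emf d N x y \<mu> f * tensor_monomial d \<gamma> (fnode d x f))
      = (\<Sum>k'<d. \<Sum>s'\<in>UNIV. if k' = k \<and> s' = s then G else 0)"
    unfolding sum_fidx_set Emf_def \<mu>_eq mface_def mpoint_def G_def by (intro sum.cong refl) auto
  also have "\<dots> = G" by (rule sum_face_delta[OF k])
  also have "G = tensor_monomial d \<gamma> (mpoint y \<mu>)"
    unfolding G_def \<mu>_eq mpoint_def by (simp add: face_lag_tensor_interpolates_monomial[OF \<gamma> k, of "y k s j", OF on_face])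
  finally show ?thesis .
qed

text \<open>The mortar rule and the face rule both integrate the product of the face Lagrange factor and
  the monomial (degree \<open>\<le> N + K\<close>) exactly, so they agree; at the face nodes the Lagrange factor is
  a Kronecker delta.\<close>

lemma mortar_quad_eq_face_quad_monomial:
  assumes \<gamma>: "\<gamma> \<in> vidx d K" and mortar: "mortar_on_faces d m y" and f: "f \<in> fidx_set d N"
    and face_exact: "face_quad_exact d (fst f) (N + Nf) (face_set d N (fst f) (fst (snd f)))
                       (\<lambda>\<alpha>. fweight d w (fst f, fst (snd f), \<alpha>))
                       (\<lambda>\<alpha>. fnode d x (fst f, fst (snd f), \<alpha>))"
    and mortar_exact: "face_quad_exact d (fst f) (N + Nm) {..<m (fst f) (fst (snd f))}
                         (om (fst f) (fst (snd f))) (y (fst f) (fst (snd f)))"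
    and KNf: "K \<le> Nf" and KNm: "K \<le> Nm"
  shows "(\<Sum>\<mu>\<in>midx_set d m. Emf d N x y \<mu> f * mweight om \<mu> * tensor_monomial d \<gamma> (mpoint y \<mu>))
       = fweight d w f * tensor_monomial d \<gamma> (fnode d x f)"
proof -
  obtain k s \<alpha> where f_eq: "f = (k, s, \<alpha>)" and k: "k < d" and \<alpha>: "\<alpha> \<in> face_set d N k s"
    using f unfolding fidx_set_def by auto
  let ?L = "{..<d} - {k}"
  let ?I = "\<Prod>l\<in>?L. poly_integral (lagrange_poly N x (\<alpha> ! l) * monom 1 (\<gamma> ! l))"
  define G where "G = (\<Sum>j<m k s. om k s j * (lag_tensor N x ?L \<alpha> (y k s j) * tensor_monomial d \<gamma> (y k s j)))"
  have "(\<Sum>\<mu>\<in>midx_set d m. Emf d N x y \<mu> f * mweight om \<mu> * tensor_monomial d \<gamma> (mpoint y \<mu>))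
      = (\<Sum>k'<d. \<Sum>s'\<in>UNIV. if k' = k \<and> s' = s then G else 0)"
    unfolding sum_midx_set Emf_def f_eq mface_def mpoint_def mweight_def G_def
    by (intro sum.cong refl) (auto simp: mult_ac)
  also have "\<dots> = G" by (rule sum_face_delta[OF k])
  also have "G = sgn_face s ^ (\<gamma> ! k) * ?I"
    unfolding G_def using mortar_exact mortar k face_set_vidx[OF \<alpha>] \<gamma> KNm unfolding f_eq mortar_on_faces_def
    by (intro face_quad_lagrange_monomial) auto
  also have "\<dots> = (\<Sum>\<alpha>'\<in>face_set d N k s. fweight d w (k, s, \<alpha>')
                    * (lag_tensor N x ?L \<alpha> (fnode d x (k, s, \<alpha>')) * tensor_monomial d \<gamma> (fnode d x (k, s, \<alpha>'))))"
    using face_exact k face_set_vidx[OF \<alpha>] \<gamma> KNf unfolding f_eq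
    by (intro face_quad_lagrange_monomial[symmetric] finite_face_set) (auto simp: fnode_def)
  also have "\<dots> = fweight d w f * tensor_monomial d \<gamma> (fnode d x f)"
    unfolding f_eq using \<alpha> finite_face_set
    by (simp add: lag_tensor_face_node if_distrib[of "\<lambda>c. _ * (c * _)"] cong: if_cong)
  finally show ?thesis .
qed

end

section \<open>The hybridized operator applied to a tensor polynomial\<close>

definition Bmortar :: "(nat \<Rightarrow> bool \<Rightarrow> nat \<Rightarrow> real) \<Rightarrow> nat \<Rightarrow> midx \<Rightarrow> real" where
  "Bmortar om i \<mu> = nrm i (fst \<mu>) (fst (snd \<mu>)) * mweight om \<mu>"

lemma Qim_simps:
  "Qim d N x w y om i (HV \<alpha>) (HV \<beta>) = (Qvol d N x w i \<alpha> \<beta> - Qvol d N x w i \<beta> \<alpha>) / 2"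
  "Qim d N x w y om i (HV \<alpha>) (HF f) = Emat d N x f \<alpha> * Bface d w i f / 2"
  "Qim d N x w y om i (HV \<alpha>) (HM \<mu>) = 0"
  "Qim d N x w y om i (HF f) (HV \<beta>) = - Bface d w i f * Emat d N x f \<beta> / 2"
  "Qim d N x w y om i (HF f) (HF f') = 0"
  "Qim d N x w y om i (HF f) (HM \<mu>) = Bface d w i f * Efm d N x w y om f \<mu> / 2"
  "Qim d N x w y om i (HM \<mu>) (HV \<beta>) = 0"
  "Qim d N x w y om i (HM \<mu>) (HF f) = - Bmortar om i \<mu> * Emf d N x y \<mu> f / 2"
  "Qim d N x w y om i (HM \<mu>) (HM \<mu>') = (if \<mu> = \<mu>' then Bmortar om i \<mu> / 2 else 0)"
  by (simp_all add: Qim_def Bface_def Bmortar_def)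

lemma gvec_simps [simp]:
  "gvec d x y g (HV \<alpha>) = g (vnode d x \<alpha>)"
  "gvec d x y g (HF f) = g (fnode d x f)"
  "gvec d x y g (HM \<mu>) = g (mpoint y \<mu>)"
  by (simp_all add: gvec_def)

lemma Qim_mortar_row_eq_0:
  assumes \<mu>: "\<mu> \<in> midx_set d m"
    and interp: "(\<Sum>f\<in>fidx_set d N. Emf d N x y \<mu> f * g (fnode d x f)) = g (mpoint y \<mu>)"
  shows "(\<Sum>h\<in>hidx_set d N m. Qim d N x w y om i (HM \<mu>) h * gvec d x y g h) = 0"
proof -
  have F: "(\<Sum>f\<in>fidx_set d N. Qim d N x w y om i (HM \<mu>) (HF f) * g (fnode d x f))
      = - (Bmortar om i \<mu> / 2) * g (mpoint y \<mu>)"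
    unfolding interp[symmetric] sum_distrib_left by (intro sum.cong) (simp_all add: Qim_simps)
  have "(\<Sum>\<mu>'\<in>midx_set d m. Qim d N x w y om i (HM \<mu>) (HM \<mu>') * g (mpoint y \<mu>'))
      = (\<Sum>\<mu>'\<in>midx_set d m. if \<mu>' = \<mu> then Bmortar om i \<mu> / 2 * g (mpoint y \<mu>) else 0)"
    by (intro sum.cong) (auto simp: Qim_simps)
  also have "\<dots> = Bmortar om i \<mu> / 2 * g (mpoint y \<mu>)" using \<mu> finite_midx_set by simp
  finally have M: "(\<Sum>\<mu>'\<in>midx_set d m. Qim d N x w y om i (HM \<mu>) (HM \<mu>') * g (mpoint y \<mu>'))
      = Bmortar om i \<mu> / 2 * g (mpoint y \<mu>)" .
  show ?thesis by (simp add: sum_hidx_set Qim_simps(3,5,7) F M)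
qed

lemma Mvol_nonzero:
  assumes "\<alpha> \<in> vidx d N" and "\<And>j. j \<le> N \<Longrightarrow> w j \<noteq> 0"
  shows "Mvol d w \<alpha> \<noteq> 0"
  using assms vidx_nth unfolding Mvol_def by (simp add: prod_zero_iff)

lemma fweight_nonzero:
  assumes "f \<in> fidx_set d N" and "\<And>j. j \<le> N \<Longrightarrow> w j \<noteq> 0"
  shows "fweight d w f \<noteq> 0"
proof -
  obtain k s \<alpha> where "f = (k, s, \<alpha>)" and "\<alpha> \<in> vidx d N"
    using assms(1) face_set_vidx unfolding fidx_set_def by auto
  moreover have "\<forall>l\<in>{..<d} - {k}. w (\<alpha> ! l) \<noteq> 0" using assms(2) vidx_nth[OF \<open>\<alpha> \<in> vidx d N\<close>] by auto
  ultimately show ?thesis by (simp add: fweight_def prod_zero_iff)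
qed

lemma Qim_face_row_eq_0:
  assumes fw: "fweight d w f \<noteq> 0"
    and interp: "(\<Sum>\<beta>\<in>vidx d N. Emat d N x f \<beta> * g (vnode d x \<beta>)) = g (fnode d x f)"
    and mortar: "(\<Sum>\<mu>\<in>midx_set d m. Emf d N x y \<mu> f * mweight om \<mu> * g (mpoint y \<mu>))
                   = fweight d w f * g (fnode d x f)"
  shows "(\<Sum>h\<in>hidx_set d N m. Qim d N x w y om i (HF f) h * gvec d x y g h) = 0"
proof -
  have V: "(\<Sum>\<beta>\<in>vidx d N. Qim d N x w y om i (HF f) (HV \<beta>) * g (vnode d x \<beta>))
      = - (Bface d w i f / 2) * g (fnode d x f)"
    unfolding interp[symmetric] sum_distrib_left by (intro sum.cong) (simp_all add: Qim_simps)
  have "(\<Sum>\<mu>\<in>midx_set d m. Efm d N x w y om f \<mu> * g (mpoint y \<mu>))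
      = (\<Sum>\<mu>\<in>midx_set d m. Emf d N x y \<mu> f * mweight om \<mu> * g (mpoint y \<mu>)) / fweight d w f"
    unfolding Efm_def sum_divide_distrib by (intro sum.cong) auto
  also have "\<dots> = g (fnode d x f)" using mortar fw by simp
  finally have E: "(\<Sum>\<mu>\<in>midx_set d m. Efm d N x w y om f \<mu> * g (mpoint y \<mu>)) = g (fnode d x f)" .
  have M: "(\<Sum>\<mu>\<in>midx_set d m. Qim d N x w y om i (HF f) (HM \<mu>) * g (mpoint y \<mu>))
      = Bface d w i f / 2 * g (fnode d x f)"
    unfolding E[symmetric] sum_distrib_left by (intro sum.cong) (simp_all add: Qim_simps)
  show ?thesis by (simp add: sum_hidx_set Qim_simps(3,5,7) V M)
qed

lemma Qim_volume_row:
  assumes Q: "(\<Sum>\<beta>\<in>vidx d N. Qvol d N x w i \<alpha> \<beta> * g (vnode d x \<beta>)) = D"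
    and QT: "(\<Sum>\<beta>\<in>vidx d N. Qvol d N x w i \<beta> \<alpha> * g (vnode d x \<beta>))
               = (\<Sum>f\<in>fidx_set d N. Emat d N x f \<alpha> * Bface d w i f * g (fnode d x f)) - D"
  shows "(\<Sum>h\<in>hidx_set d N m. Qim d N x w y om i (HV \<alpha>) h * gvec d x y g h) = D"
proof -
  let ?B = "\<Sum>f\<in>fidx_set d N. Emat d N x f \<alpha> * Bface d w i f * g (fnode d x f)"
  have "(\<Sum>\<beta>\<in>vidx d N. Qim d N x w y om i (HV \<alpha>) (HV \<beta>) * g (vnode d x \<beta>))
      = ((\<Sum>\<beta>\<in>vidx d N. Qvol d N x w i \<alpha> \<beta> * g (vnode d x \<beta>))
          - (\<Sum>\<beta>\<in>vidx d N. Qvol d N x w i \<beta> \<alpha> * g (vnode d x \<beta>))) / 2"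
    unfolding sum_subtractf[symmetric] sum_divide_distrib by (intro sum.cong) (simp_all add: Qim_simps left_diff_distrib)
  then have V: "(\<Sum>\<beta>\<in>vidx d N. Qim d N x w y om i (HV \<alpha>) (HV \<beta>) * g (vnode d x \<beta>)) = (D - (?B - D)) / 2"
    unfolding Q QT .
  have F: "(\<Sum>f\<in>fidx_set d N. Qim d N x w y om i (HV \<alpha>) (HF f) * g (fnode d x f)) = ?B / 2"
    unfolding sum_divide_distrib by (intro sum.cong) (simp_all add: Qim_simps)
  show ?thesis using V F by (simp add: sum_hidx_set Qim_simps(3,5,7))
qed

lemma Prow_apply:
  assumes \<alpha>: "\<alpha> \<in> vidx d N"
    and "\<And>f. f \<in> fidx_set d N \<Longrightarrow> r (HF f) = 0" and "\<And>\<mu>. \<mu> \<in> midx_set d m \<Longrightarrow> r (HM \<mu>) = 0"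
  shows "(\<Sum>h\<in>hidx_set d N m. Prow d N x m y \<alpha> h * r h) = r (HV \<alpha>)"
proof -
  have "(\<Sum>\<beta>\<in>vidx d N. Prow d N x m y \<alpha> (HV \<beta>) * r (HV \<beta>))
      = (\<Sum>\<beta>\<in>vidx d N. if \<beta> = \<alpha> then r (HV \<alpha>) else 0)"
    by (intro sum.cong) (auto simp: Prow_def)
  then show ?thesis using assms finite_vidx by (simp add: sum_hidx_set)
qed

context gauss_type_rule
begin

context
  fixes d K :: nat and c :: "nat list \<Rightarrow> real" and g :: "(nat \<Rightarrow> real) \<Rightarrow> real"
  assumes K_le_N: "K \<le> N"
    and g_eq: "\<And>p. g p = (\<Sum>\<gamma>\<in>vidx d K. c \<gamma> * tensor_monomial d \<gamma> p)"
begin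

lemma mem_vidx_N: "\<gamma> \<in> vidx d K \<Longrightarrow> \<gamma> \<in> vidx d N"
  using vidx_mono[OF K_le_N] by blast

lemma Emat_interpolates: "(\<Sum>\<beta>\<in>vidx d N. Emat d N x f \<beta> * g (vnode d x \<beta>)) = g (fnode d x f)"
  unfolding sum_mult_sum_tensor_monomial[OF g_eq] g_eq[of "fnode d x f"] Emat_def
  by (intro sum.cong refl arg_cong[where f = "(*) _"] lag_tensor_interpolates_monomial mem_vidx_N)

lemma Emf_interpolates:
  assumes "mortar_on_faces d m y" and "\<mu> \<in> midx_set d m"
  shows "(\<Sum>f\<in>fidx_set d N. Emf d N x y \<mu> f * g (fnode d x f)) = g (mpoint y \<mu>)"
  unfolding sum_mult_sum_tensor_monomial[OF g_eq] g_eq[of "mpoint y \<mu>"]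
  using assms by (intro sum.cong refl arg_cong[where f = "(*) _"] Emf_interpolates_monomial mem_vidx_N)

lemma mortar_quad_eq_face_quad:
  assumes "f \<in> fidx_set d N" and "mortar_on_faces d m y"
    and "face_quad_exact d (fst f) (N + Nf) (face_set d N (fst f) (fst (snd f)))
           (\<lambda>\<alpha>. fweight d w (fst f, fst (snd f), \<alpha>)) (\<lambda>\<alpha>. fnode d x (fst f, fst (snd f), \<alpha>))"
    and "face_quad_exact d (fst f) (N + Nm) {..<m (fst f) (fst (snd f))}
           (om (fst f) (fst (snd f))) (y (fst f) (fst (snd f)))"
    and "K \<le> Nf" and "K \<le> Nm"
  shows "(\<Sum>\<mu>\<in>midx_set d m. Emf d N x y \<mu> f * mweight om \<mu> * g (mpoint y \<mu>))
       = fweight d w f * g (fnode d x f)"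
proof -
  have "(\<Sum>\<mu>\<in>midx_set d m. Emf d N x y \<mu> f * mweight om \<mu> * g (mpoint y \<mu>))
      = (\<Sum>\<gamma>\<in>vidx d K. c \<gamma> * (fweight d w f * tensor_monomial d \<gamma> (fnode d x f)))"
    unfolding sum_mult_sum_tensor_monomial[OF g_eq]
    using assms
    by (intro sum.cong refl arg_cong[where f = "(*) _"]
        mortar_quad_eq_face_quad_monomial[where Nf = Nf and Nm = Nm]) auto
  then show ?thesis unfolding g_eq[of "fnode d x f"] by (simp add: sum_distrib_left mult_ac)
qed

lemma Qvol_apply:
  assumes "\<alpha> \<in> vidx d N" and "i < d"
  shows "(\<Sum>\<beta>\<in>vidx d N. Qvol d N x w i \<alpha> \<beta> * g (vnode d x \<beta>))
       = Mvol d w \<alpha> * partial_deriv g i (vnode d x \<alpha>)"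
proof -
  have "(\<Sum>\<beta>\<in>vidx d N. Qvol d N x w i \<alpha> \<beta> * g (vnode d x \<beta>))
      = (\<Sum>\<gamma>\<in>vidx d K. c \<gamma> * (Mvol d w \<alpha> * tensor_monomial_deriv d \<gamma> i (vnode d x \<alpha>)))"
    unfolding sum_mult_sum_tensor_monomial[OF g_eq]
    using assms by (intro sum.cong refl arg_cong[where f = "(*) _"] Qvol_apply_monomial) (auto intro: mem_vidx_N)
  then show ?thesis
    using partial_deriv_sum_tensor_monomial[OF \<open>i < d\<close> g_eq]
    by (simp add: sum_distrib_left mult_ac)
qed

lemma Qvol_transpose_apply:
  assumes "\<alpha> \<in> vidx d N" and "i < d"
  shows "(\<Sum>\<beta>\<in>vidx d N. Qvol d N x w i \<beta> \<alpha> * g (vnode d x \<beta>))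
       = (\<Sum>f\<in>fidx_set d N. Emat d N x f \<alpha> * Bface d w i f * g (fnode d x f))
         - Mvol d w \<alpha> * partial_deriv g i (vnode d x \<alpha>)"
proof -
  have "(\<Sum>\<beta>\<in>vidx d N. Qvol d N x w i \<beta> \<alpha> * g (vnode d x \<beta>))
      = (\<Sum>\<gamma>\<in>vidx d K. c \<gamma> * ((\<Sum>f\<in>fidx_set d N. Emat d N x f \<alpha> * Bface d w i f
                                      * tensor_monomial d \<gamma> (fnode d x f))
                                   - Mvol d w \<alpha> * tensor_monomial_deriv d \<gamma> i (vnode d x \<alpha>)))"
    unfolding sum_mult_sum_tensor_monomial[OF g_eq]
    using assms
    by (intro sum.cong refl arg_cong[where f = "(*) _"] Qvol_transpose_apply_monomial)
      (auto intro: mem_vidx_N)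
  also have "\<dots> = (\<Sum>f\<in>fidx_set d N. Emat d N x f \<alpha> * Bface d w i f * g (fnode d x f))
         - Mvol d w \<alpha> * partial_deriv g i (vnode d x \<alpha>)"
    unfolding sum_mult_sum_tensor_monomial[OF g_eq] partial_deriv_sum_tensor_monomial[OF \<open>i < d\<close> g_eq]
    by (simp add: right_diff_distrib sum_subtractf sum_distrib_left mult_ac)
  finally show ?thesis .
qed

end

end

theorem mainTheorem2:
  fixes d N Nf Nm i :: nat
    and x w :: "nat \<Rightarrow> real"
    and m :: "nat \<Rightarrow> bool \<Rightarrow> nat"
    and y :: "nat \<Rightarrow> bool \<Rightarrow> nat \<Rightarrow> nat \<Rightarrow> real"
    and om :: "nat \<Rightarrow> bool \<Rightarrow> nat \<Rightarrow> real"
    and g :: "(nat \<Rightarrow> real) \<Rightarrow> real"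
  assumes dim: "d = 2 \<or> d = 3"
    and N1: "N \<ge> 1"
    and rule: "gauss_legendre N x w \<or> gauss_lobatto N x w"
    and mortar: "mortar_on_faces d m y"
    and face_exact: "\<forall>k<d. \<forall>s. face_quad_exact d k (N + Nf) (face_set d N k s)
                        (\<lambda>\<alpha>. fweight d w (k, s, \<alpha>)) (\<lambda>\<alpha>. fnode d x (k, s, \<alpha>))"
    and mortar_exact: "\<forall>k<d. \<forall>s. face_quad_exact d k (N + Nm) {..<m k s} (om k s) (y k s)"
    and gpoly: "tensor_poly d (min N (min Nf Nm)) g"
    and i: "i < d"
  shows "\<forall>\<alpha>\<in>vidx d N.
           (1 / Mvol d w \<alpha>) *
             (\<Sum>h\<in>hidx_set d N m. Prow d N x m y \<alpha> h *
                (\<Sum>h'\<in>hidx_set d N m. Qim d N x w y om i h h' * gvec d x y g h'))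
           = partial_deriv g i (vnode d x \<alpha>)"
proof
  fix \<alpha> assume \<alpha>: "\<alpha> \<in> vidx d N"
  interpret gauss_type_rule N x w using rule N1 by (rule gauss_type_ruleI)
  define K where "K = min N (min Nf Nm)"
  have K: "K \<le> N" "K \<le> Nf" "K \<le> Nm" unfolding K_def by auto
  obtain c where g_eq: "\<And>p. g p = (\<Sum>\<gamma>\<in>vidx d K. c \<gamma> * tensor_monomial d \<gamma> p)"
    using gpoly unfolding tensor_poly_def tensor_monomial_def K_def by blast
  let ?row = "\<lambda>h. \<Sum>h'\<in>hidx_set d N m. Qim d N x w y om i h h' * gvec d x y g h'"
  have "?row (HF f) = 0" if f: "f \<in> fidx_set d N" for f
  proof (rule Qim_face_row_eq_0[OF fweight_nonzero[OF f weights_nonzero] Emat_interpolates[OF K(1) g_eq]])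
    have "fst f < d" using f unfolding fidx_set_def by auto
    then show "(\<Sum>\<mu>\<in>midx_set d m. Emf d N x y \<mu> f * mweight om \<mu> * g (mpoint y \<mu>))
        = fweight d w f * g (fnode d x f)"
      using f mortar face_exact mortar_exact K by (intro mortar_quad_eq_face_quad[OF K(1) g_eq, where Nf = Nf and Nm = Nm]) auto
  qed
  moreover have "?row (HM \<mu>) = 0" if "\<mu> \<in> midx_set d m" for \<mu>
    using that mortar by (intro Qim_mortar_row_eq_0 Emf_interpolates[OF K(1) g_eq])
  moreover have "?row (HV \<alpha>) = Mvol d w \<alpha> * partial_deriv g i (vnode d x \<alpha>)"
    by (rule Qim_volume_row[OF Qvol_apply[OF K(1) g_eq \<alpha> i] Qvol_transpose_apply[OF K(1) g_eq \<alpha> i]])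
  ultimately show "1 / Mvol d w \<alpha> * (\<Sum>h\<in>hidx_set d N m. Prow d N x m y \<alpha> h * ?row h)
      = partial_deriv g i (vnode d x \<alpha>)"
    using Prow_apply[OF \<alpha>, of ?row] Mvol_nonzero[OF \<alpha> weights_nonzero] by simp
qed

end
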